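(* With the notation of the context: (a) If $X\to X'$ is an elementary $K$-reduction of an element $X\in kF_\infty^+$, then $\pi(X)=\pi(X')$ and $\operatorname{wt}X\ge\operatorname{wt}X'$. If moreover $X$ is a single word, then $\operatorname{wt}X=\operatorname{wt}X'$ if and only if the reduction is of type (viii), and in that case $\operatorname{wt}'X<\operatorname{wt}'X'$. (b) $\pi(F_\infty^{\rm red})$ generates $K_\infty$ as a $k$-module. (c) $F_\infty^{\rm red}$ is exactly the set of words $X_1X_2\cdots X_m$ where $X_\nu=x_{i_\nu}^{\pm1}x_{i_\nu-1}^{\pm1}\cdots x_{j_\nu}^{\pm1}$ with $i_\nu\ge j_\nu\ge1$ ($1\le\nu\le m$), $i_1<i_2<\dots<i_m$, and all signs chosen independently (including the empty word, $m=0$).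
   Context: Let $k$ be a commutative ring with $1\ne0$ and $\alpha,\beta\in k$. For $n\ge1$, $B_n$ is the braid group with standard generators $\sigma_1,\dots,\sigma_{n-1}$. Put $P(x,\bar x,y,\bar y)=2\alpha-\beta^2-(x+y)-(\alpha^2-\beta)(\bar x+\bar y)+\beta(xy+yx)+\alpha(x\bar y+y\bar x+\bar xy+\bar yx)+(\alpha\beta-1)(\bar x\bar y+\bar y\bar x)-\alpha xyx-(\bar xyx+x\bar yx+xy\bar x)-\beta(\bar x\bar yx+x\bar y\bar x)+(\alpha-\beta^2)\bar x\bar y\bar x$, and let $Q$ be obtained from $P$ by swapping $x\leftrightarrow\bar x$, $y\leftrightarrow\bar y$, $\alpha\leftrightarrow\beta$. $K_n$ is the quotient of $kB_n$ by the two-sided ideal generated by $\sigma_1^3-\alpha\sigma_1^2+\beta\sigma_1-1$ and $\sigma_2\sigma_1^{-1}\sigma_2-P(\sigma_1,\sigma_1^{-1},\sigma_2,\sigma_2^{-1})$ (the latter when $n\ge3$); $s_i$ is the image of $\sigma_i$; $K_\infty$ is the direct limit of the $K_n$ along the maps induced by $B_n\subset B_{n+1}$. $F_n^+$ is the free monoid on the letters $x_1^{\pm1},\dots,x_{n-1}^{\pm1}$ (no cancellation), $F_\infty^+=\bigcup_nF_n^+$, $kF_\infty^+$ the free associative $k$-algebra on these letters, and $\pi:kF_\infty^+\to K_\infty$ the algebra map $x_i^{\pm1}\mapsto s_i^{\pm1}$. Basic replacements $U\to V$, for all $i\ge1$: (i) $x_ix_i^{-1}\to1$, $x_i^{-1}x_i\to1$;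 (ii) $x_i^2\to\alpha x_i-\beta+x_i^{-1}$; (iii) $x_i^{-2}\to\beta x_i^{-1}-\alpha+x_i$; (iv) $x_{i+1}^{\varepsilon_1}x_i^{\varepsilon_2}x_{i+1}^{\varepsilon_3}\to x_i^{\varepsilon_3}x_{i+1}^{\varepsilon_2}x_i^{\varepsilon_1}$ for $\varepsilon_j\in\{\pm1\}$ with $\varepsilon_2\in\{\varepsilon_1,\varepsilon_3\}$; (v) $x_{i+1}x_i^{-1}x_{i+1}\to P(x_i,x_i^{-1},x_{i+1},x_{i+1}^{-1})$; (vi) $x_{i+1}^{-1}x_ix_{i+1}^{-1}\to Q(x_i,x_i^{-1},x_{i+1},x_{i+1}^{-1})$; (vii) $x_{i+1}^{\varepsilon_1}x_i^{\varepsilon_2}Wx_{i+1}^{\varepsilon_3}\to VW$ whenever $x_{i+1}^{\varepsilon_1}x_i^{\varepsilon_2}x_{i+1}^{\varepsilon_3}\to V$ is one of (iv)–(vi) and $W$ is a word in $x_1^{\pm1},\dots,x_{i-1}^{\pm1}$; (viii) $x_j^{\varepsilon_1}x_i^{\varepsilon_2}\to x_i^{\varepsilon_2}x_j^{\varepsilon_1}$ for $\varepsilon_1,\varepsilon_2\in\{\pm1\}$, $j-1>i\ge1$. An elementary $K$-reduction of a word is $CUD\to CVD$ with $U\to V$ a basic replacement; of an element $\sum_{j=1}^mc_jW_j$ (pairwise distinct words $W_j$) it is $\sum_jc_jW_j\to c_1W_1'+\sum_{j\ge2}c_jW_j$ where $W_1\to W_1'$ is an elementary $K$-reduction of a word.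 A word is $K$-reduced if no elementary $K$-reduction applies to it; $F_\infty^{\rm red}$ is the set of $K$-reduced words. For a word $x_{i_1}^{\varepsilon_1}\cdots x_{i_m}^{\varepsilon_m}$, $\operatorname{wt}=\sum_ji_j$ and $\operatorname{wt}'=\sum_jj\,i_j$; the weight of an element of $kF_\infty^+$ is the maximum weight of its words with nonzero coefficient. *)

theory Defs
  imports Main
begin

text \<open>Letters of the free monoid: a pair (i, e) stands for x_i if e = True and for
  x_i^{-1} if e = False.  Elements of the free
  associative k-algebra are represented as coefficient functions on words
  (finitely supported where relevant).\<close>

type_synonym letter = "nat \<times> bool"
type_synonym word = "letter list"
type_synonym 'k elt = "word \<Rightarrow> 'k"

definition valid_word :: "word \<Rightarrow> bool" where
  "valid_word w \<longleftrightarrow> (\<forall>l\<in>set w. 1 \<le> fst l)"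

definition in_kF :: "'k::comm_ring_1 elt \<Rightarrow> bool" where
  "in_kF X \<longleftrightarrow> finite {w. X w \<noteq> 0} \<and> (\<forall>w. X w \<noteq> 0 \<longrightarrow> valid_word w)"

definition wd :: "word \<Rightarrow> 'k::comm_ring_1 elt" where
  "wd u = (\<lambda>w. if w = u then 1 else 0)"

definition emult :: "'k::comm_ring_1 elt \<Rightarrow> 'k elt \<Rightarrow> 'k elt" where
  "emult X Y = (\<lambda>w. \<Sum>i\<le>length w. X (take i w) * Y (drop i w))"

definition lc :: "('k::comm_ring_1 \<times> word) list \<Rightarrow> 'k elt" where
  "lc xs = (\<lambda>w. sum_list (map (\<lambda>(c, v). if v = w then c else 0) xs))"

definition Ppoly :: "'k::comm_ring_1 \<Rightarrow> 'k \<Rightarrow> letter \<Rightarrow> letter \<Rightarrow> letter \<Rightarrow> letter \<Rightarrow> 'k elt" where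
  "Ppoly \<alpha> \<beta> x xb y yb = lc
    [ (2*\<alpha> - \<beta>^2, []),
      (-1, [x]), (-1, [y]),
      (-(\<alpha>^2 - \<beta>), [xb]), (-(\<alpha>^2 - \<beta>), [yb]),
      (\<beta>, [x, y]), (\<beta>, [y, x]),
      (\<alpha>, [x, yb]), (\<alpha>, [y, xb]), (\<alpha>, [xb, y]), (\<alpha>, [yb, x]),
      (\<alpha>*\<beta> - 1, [xb, yb]), (\<alpha>*\<beta> - 1, [yb, xb]),
      (-\<alpha>, [x, y, x]),
      (-1, [xb, y, x]), (-1, [x, yb, x]), (-1, [x, y, xb]),
      (-\<beta>, [xb, yb, x]), (-\<beta>, [x, yb, xb]),
      (\<alpha> - \<beta>^2, [xb, yb, xb]) ]"

definition Qpoly :: "'k::comm_ring_1 \<Rightarrow> 'k \<Rightarrow> letter \<Rightarrow> letter \<Rightarrow> letter \<Rightarrow> letter \<Rightarrow> 'k elt" where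
  "Qpoly \<alpha> \<beta> x xb y yb = Ppoly \<beta> \<alpha> xb x yb y"

text \<open>Generators of the two-sided ideal presenting K_infinity as a quotient of the
  free algebra on the letters: group-algebra relations of the braid group B_infinity
  (inverses, braid relations, far commutation) together with the two defining
  relations of K.\<close>
inductive_set Kgens :: "'k::comm_ring_1 \<Rightarrow> 'k \<Rightarrow> 'k elt set" for \<alpha> \<beta> :: 'k where
  inv1: "1 \<le> i \<Longrightarrow> (\<lambda>w. wd [(i,True),(i,False)] w - wd [] w) \<in> Kgens \<alpha> \<beta>"
| inv2: "1 \<le> i \<Longrightarrow> (\<lambda>w. wd [(i,False),(i,True)] w - wd [] w) \<in> Kgens \<alpha> \<beta>"
| braid: "1 \<le> i \<Longrightarrow> (\<lambda>w. wd [(i,True),(Suc i,True),(i,True)] w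
            - wd [(Suc i,True),(i,True),(Suc i,True)] w) \<in> Kgens \<alpha> \<beta>"
| comm: "1 \<le> i \<Longrightarrow> Suc i < j \<Longrightarrow> (\<lambda>w. wd [(i,True),(j,True)] w - wd [(j,True),(i,True)] w) \<in> Kgens \<alpha> \<beta>"
| cubic: "(\<lambda>w. wd [(1,True),(1,True),(1,True)] w - \<alpha> * wd [(1,True),(1,True)] w
            + \<beta> * wd [(1,True)] w - wd [] w) \<in> Kgens \<alpha> \<beta>"
| prel: "(\<lambda>w. wd [(2,True),(1,False),(2,True)] w
            - Ppoly \<alpha> \<beta> (1,True) (1,False) (2,True) (2,False) w) \<in> Kgens \<alpha> \<beta>"

inductive_set Kideal :: "'k::comm_ring_1 \<Rightarrow> 'k \<Rightarrow> 'k elt set" for \<alpha> \<beta> :: 'k where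
  gen: "g \<in> Kgens \<alpha> \<beta> \<Longrightarrow> g \<in> Kideal \<alpha> \<beta>"
| zero: "(\<lambda>w. 0) \<in> Kideal \<alpha> \<beta>"
| add: "X \<in> Kideal \<alpha> \<beta> \<Longrightarrow> Y \<in> Kideal \<alpha> \<beta> \<Longrightarrow> (\<lambda>w. X w + Y w) \<in> Kideal \<alpha> \<beta>"
| smult: "X \<in> Kideal \<alpha> \<beta> \<Longrightarrow> (\<lambda>w. c * X w) \<in> Kideal \<alpha> \<beta>"
| lmult: "X \<in> Kideal \<alpha> \<beta> \<Longrightarrow> valid_word u \<Longrightarrow> emult (wd u) X \<in> Kideal \<alpha> \<beta>"
| rmult: "X \<in> Kideal \<alpha> \<beta> \<Longrightarrow> valid_word u \<Longrightarrow> emult X (wd u) \<in> Kideal \<alpha> \<beta>"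

text \<open>pi X = pi Y in K_infinity = kF_infinity^+ / Kideal.\<close>
definition pi_eq :: "'k::comm_ring_1 \<Rightarrow> 'k \<Rightarrow> 'k elt \<Rightarrow> 'k elt \<Rightarrow> bool" where
  "pi_eq \<alpha> \<beta> X Y \<longleftrightarrow> (\<lambda>w. X w - Y w) \<in> Kideal \<alpha> \<beta>"

datatype rtype = Ri | Rii | Riii | Riv | Rv | Rvi | Rvii | Rviii

definition triple_rep :: "'k::comm_ring_1 \<Rightarrow> 'k \<Rightarrow> nat \<Rightarrow> bool \<Rightarrow> bool \<Rightarrow> bool \<Rightarrow> 'k elt" where
  "triple_rep \<alpha> \<beta> i e1 e2 e3 =
     (if e2 = e1 \<or> e2 = e3 then wd [(i,e3),(Suc i,e2),(i,e1)]
      else if e1 then Ppoly \<alpha> \<beta> (i,True) (i,False) (Suc i,True) (Suc i,False)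
      else Qpoly \<alpha> \<beta> (i,True) (i,False) (Suc i,True) (Suc i,False))"

definition triple_type :: "bool \<Rightarrow> bool \<Rightarrow> bool \<Rightarrow> rtype" where
  "triple_type e1 e2 e3 = (if e2 = e1 \<or> e2 = e3 then Riv else if e1 then Rv else Rvi)"

inductive basic_rep :: "'k::comm_ring_1 \<Rightarrow> 'k \<Rightarrow> rtype \<Rightarrow> word \<Rightarrow> 'k elt \<Rightarrow> bool"
  for \<alpha> \<beta> :: 'k where
  r1a: "1 \<le> i \<Longrightarrow> basic_rep \<alpha> \<beta> Ri [(i,True),(i,False)] (wd [])"
| r1b: "1 \<le> i \<Longrightarrow> basic_rep \<alpha> \<beta> Ri [(i,False),(i,True)] (wd [])"
| r2: "1 \<le> i \<Longrightarrow> basic_rep \<alpha> \<beta> Rii [(i,True),(i,True)]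
          (lc [(\<alpha>, [(i,True)]), (-\<beta>, []), (1, [(i,False)])])"
| r3: "1 \<le> i \<Longrightarrow> basic_rep \<alpha> \<beta> Riii [(i,False),(i,False)]
          (lc [(\<beta>, [(i,False)]), (-\<alpha>, []), (1, [(i,True)])])"
| r456: "1 \<le> i \<Longrightarrow> basic_rep \<alpha> \<beta> (triple_type e1 e2 e3)
          [(Suc i,e1),(i,e2),(Suc i,e3)] (triple_rep \<alpha> \<beta> i e1 e2 e3)"
| r7: "1 \<le> i \<Longrightarrow> (\<forall>l\<in>set W. 1 \<le> fst l \<and> fst l < i) \<Longrightarrow>
         basic_rep \<alpha> \<beta> Rvii ([(Suc i,e1),(i,e2)] @ W @ [(Suc i,e3)])
           (emult (triple_rep \<alpha> \<beta> i e1 e2 e3) (wd W))"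
| r8: "1 \<le> i \<Longrightarrow> Suc i < j \<Longrightarrow> basic_rep \<alpha> \<beta> Rviii [(j,e1),(i,e2)] (wd [(i,e2),(j,e1)])"

definition elem_red_word :: "'k::comm_ring_1 \<Rightarrow> 'k \<Rightarrow> rtype \<Rightarrow> word \<Rightarrow> 'k elt \<Rightarrow> bool" where
  "elem_red_word \<alpha> \<beta> t X X' \<longleftrightarrow>
     (\<exists>C U V D. X = C @ U @ D \<and> basic_rep \<alpha> \<beta> t U V \<and> X' = emult (emult (wd C) V) (wd D))"

definition elem_red :: "'k::comm_ring_1 \<Rightarrow> 'k \<Rightarrow> 'k elt \<Rightarrow> 'k elt \<Rightarrow> bool" where
  "elem_red \<alpha> \<beta> X X' \<longleftrightarrow>
     (\<exists>W W' t. X W \<noteq> 0 \<and> elem_red_word \<alpha> \<beta> t W W' \<and>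
        X' = (\<lambda>w. X w - (if w = W then X W else 0) + X W * W' w))"

definition red_words :: "'k::comm_ring_1 \<Rightarrow> 'k \<Rightarrow> word set" where
  "red_words \<alpha> \<beta> = {w. valid_word w \<and> \<not> (\<exists>t W'. elem_red_word \<alpha> \<beta> t w W')}"

definition wt :: "word \<Rightarrow> nat" where
  "wt w = sum_list (map fst w)"

definition wtp :: "word \<Rightarrow> nat" where
  "wtp w = (\<Sum>j<length w. (j + 1) * fst (w ! j))"

definition wt_elt :: "'k::comm_ring_1 elt \<Rightarrow> nat" where
  "wt_elt X = Max (insert 0 (wt ` {w. X w \<noteq> 0}))"

definition is_block :: "word \<Rightarrow> bool" where
  "is_block b \<longleftrightarrow> (\<exists>i j. 1 \<le> j \<and> j \<le> i \<and> map fst b = rev [j..<Suc i])"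

definition normal_words :: "word set" where
  "normal_words = {w. \<exists>bs. (\<forall>b\<in>set bs. is_block b) \<and>
       sorted_wrt (<) (map (\<lambda>b. fst (hd b)) bs) \<and> w = concat bs}"

end

theory Submission
  imports Defs
begin

(*
  (1) From the generators of the ideal we derive: the braid group relations for all
      sign patterns, far commutation with arbitrary words, and, by conjugating with
      delta_m = x_1 x_2 ... x_{m+1} (which shifts all indices up by one), the cubic
      relation and the relation defining P at every index i.  Expressing Q, (ii) and
      (iii) in terms of these shows that each basic replacement U -> V satisfies
      pi(U) = pi(V).
  (2) Inspecting the replacements: types (i)-(vii) strictly lower the weight, type
      (viii) keeps the weight and raises wt'.  This gives part (a).
  (3) Part (b) follows by well-founded induction on (wt, wt^2 - wt'): a word is either
      reduced or equal in K to a combination of smaller words.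
  (4) Part (c): w @ [l] is reducible iff w is reducible or l completes a redex at the
      end (last_redex).  By induction this characterizes the reduced words letter by
      letter ("admissible" words: each letter continues the current descending run or
      exceeds all previous indices), and these are exactly the block normal forms.
*)

section \<open>Calculus of the free algebra\<close>

lemma emult_wd_left:
  "emult (wd u) X w = (if take (length u) w = u then X (drop (length u) w) else 0)"
proof -
  have "emult (wd u) X w = (\<Sum>i\<le>length w. if i = length u then
          (if take (length u) w = u then X (drop (length u) w) else 0) else 0)"
    unfolding emult_def wd_def by (rule sum.cong) auto
  also have "\<dots> = (if take (length u) w = u then X (drop (length u) w) else 0)"
    by (cases "length u \<le> length w") (auto simp: sum.delta)
  finally show ?thesis .
qed

lemma emult_wd_right:
  "emult X (wd v) w = (if length v \<le> length w \<and> drop (length w - length v) w = v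
                       then X (take (length w - length v) w) else 0)"
proof -
  have "emult X (wd v) w = (\<Sum>i\<le>length w. if i = length w - length v then
          (if length v \<le> length w \<and> drop (length w - length v) w = v
           then X (take (length w - length v) w) else 0) else 0)"
    unfolding emult_def wd_def by (rule sum.cong) auto
  also have "\<dots> = (if length v \<le> length w \<and> drop (length w - length v) w = v
                   then X (take (length w - length v) w) else 0)"
    by (auto simp: sum.delta)
  finally show ?thesis .
qed

lemma append_eq_conv_suffix:
  "(x @ v = z) \<longleftrightarrow> length v \<le> length z \<and> drop (length z - length v) z = v
                   \<and> take (length z - length v) z = x"
  by (metis append_eq_conv_conj append_take_drop_id diff_diff_cancel length_append
      length_drop le_add2 add_diff_cancel_right')

lemma lc_Nil: "lc [] = (\<lambda>w. 0)"
  by (simp add: lc_def)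

lemma lc_Cons: "lc ((c,v) # L) = (\<lambda>w. (if v = w then c else 0) + lc L w)"
  by (simp add: lc_def)

lemma lc_append: "lc (L1 @ L2) = (\<lambda>w. lc L1 w + lc L2 w)"
  by (simp add: lc_def)

lemma lc_scale: "lc (map (\<lambda>(c,w). (d*c, w)) L) = (\<lambda>w. d * lc L w)"
  by (rule ext, induction L) (auto simp: lc_def algebra_simps)

lemma wd_lc: "wd u = lc [(1,u)]"
  by (auto simp: lc_def wd_def)

lemma emult_wd_lc_left: "emult (wd u) (lc L) = lc (map (\<lambda>(c,w). (c, u@w)) L)"
proof (rule ext)
  fix z
  show "emult (wd u) (lc L) z = lc (map (\<lambda>(c,w). (c, u@w)) L) z"
    unfolding emult_wd_left by (induction L) (auto simp: lc_def append_eq_conv_conj)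
qed

lemma emult_wd_lc_right: "emult (lc L) (wd v) = lc (map (\<lambda>(c,w). (c, w@v)) L)"
proof (rule ext)
  fix z
  show "emult (lc L) (wd v) z = lc (map (\<lambda>(c,w). (c, w@v)) L) z"
    unfolding emult_wd_right
    by (induction L) (auto simp: lc_def append_eq_conv_suffix)
qed

lemma lc_nonzero_listed:
  assumes "lc L w \<noteq> 0" shows "w \<in> snd ` set L"
proof -
  have "w \<notin> snd ` set L \<Longrightarrow> lc L w = 0" by (induction L) (auto simp: lc_def)
  then show ?thesis using assms by blast
qed

lemma lc_eqI: "list_all (\<lambda>w. lc L1 w = lc L2 w) (map snd (L1 @ L2)) \<Longrightarrow> lc L1 = lc L2"
proof (rule ext)
  fix w assume agree: "list_all (\<lambda>w. lc L1 w = lc L2 w) (map snd (L1 @ L2))"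
  show "lc L1 w = lc L2 w"
  proof (cases "w \<in> set (map snd (L1 @ L2))")
    case True then show ?thesis using agree by (simp add: list_all_iff)
  next
    case False
    then have "lc L1 w = 0" "lc L2 w = 0"
      using lc_nonzero_listed[of L1 w] lc_nonzero_listed[of L2 w] by force+
    then show ?thesis by simp
  qed
qed

lemma valid_append[simp]: "valid_word (u @ v) \<longleftrightarrow> valid_word u \<and> valid_word v"
  by (auto simp: valid_word_def)

lemma valid_Cons[simp]: "valid_word (l # v) \<longleftrightarrow> 1 \<le> fst l \<and> valid_word v"
  by (auto simp: valid_word_def)

lemma valid_Nil[simp]: "valid_word []"
  by (auto simp: valid_word_def)


section \<open>Relations in K\<close>

definition K_rel :: "'k::comm_ring_1 \<Rightarrow> 'k \<Rightarrow> ('k \<times> word) list \<Rightarrow> bool" where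
  "K_rel a b L \<longleftrightarrow> lc L \<in> Kideal a b"

definition neg_terms :: "('k::comm_ring_1 \<times> word) list \<Rightarrow> ('k \<times> word) list" where
  "neg_terms L = map (\<lambda>(c,w). (-c, w)) L"

definition sandwich :: "'k::comm_ring_1 \<Rightarrow> word \<Rightarrow> ('k \<times> word) list \<Rightarrow> word \<Rightarrow> ('k \<times> word) list" where
  "sandwich c p L s = map (\<lambda>(d,w). (c*d, p@w@s)) L"

lemma lc_neg_terms: "lc (neg_terms L) w = - lc L w"
  by (induction L) (auto simp: neg_terms_def lc_def)

context fixes \<alpha> \<beta> :: "'k::comm_ring_1" begin

lemma K_rel_lc: "K_rel \<alpha> \<beta> L \<Longrightarrow> lc L = lc L' \<Longrightarrow> K_rel \<alpha> \<beta> L'"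
  by (simp add: K_rel_def)

lemma K_rel_Nil: "K_rel \<alpha> \<beta> []"
  by (simp add: K_rel_def lc_Nil Kideal.zero)

lemma K_rel_append: "K_rel \<alpha> \<beta> L1 \<Longrightarrow> K_rel \<alpha> \<beta> L2 \<Longrightarrow> K_rel \<alpha> \<beta> (L1 @ L2)"
  by (simp add: K_rel_def lc_append Kideal.add)

lemma K_rel_scale: "K_rel \<alpha> \<beta> L \<Longrightarrow> K_rel \<alpha> \<beta> (map (\<lambda>(c,w). (d*c, w)) L)"
  by (simp add: K_rel_def lc_scale Kideal.smult)

lemma K_rel_neg: "K_rel \<alpha> \<beta> L \<Longrightarrow> K_rel \<alpha> \<beta> (neg_terms L)"
  using K_rel_scale[of L "-1"] by (simp add: neg_terms_def)

lemma K_rel_mult: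
  assumes "K_rel \<alpha> \<beta> L" "valid_word u" "valid_word v"
  shows "K_rel \<alpha> \<beta> (map (\<lambda>(c,w). (c, u@w@v)) L)"
proof -
  have "emult (wd u) (emult (lc L) (wd v)) \<in> Kideal \<alpha> \<beta>"
    using assms by (intro Kideal.lmult Kideal.rmult) (auto simp: K_rel_def)
  also have "emult (wd u) (emult (lc L) (wd v)) = lc (map (\<lambda>(c,w). (c, u@w@v)) L)"
    by (simp add: emult_wd_lc_right emult_wd_lc_left comp_def split_def)
  finally show ?thesis by (simp add: K_rel_def)
qed

lemma K_rel_sandwich:
  "K_rel \<alpha> \<beta> L \<Longrightarrow> valid_word p \<Longrightarrow> valid_word s \<Longrightarrow> K_rel \<alpha> \<beta> (sandwich c p L s)"
  using K_rel_scale[OF K_rel_mult, of L p s c] by (simp add: sandwich_def comp_def split_def)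

definition K_eq :: "word \<Rightarrow> word \<Rightarrow> bool" where
  "K_eq u v \<longleftrightarrow> K_rel \<alpha> \<beta> [(1,u),(-1,v)]"

lemma K_eq_refl: "K_eq u u"
  unfolding K_eq_def by (rule K_rel_lc[OF K_rel_Nil]) (auto simp: lc_def)

lemma K_eq_sym: "K_eq u v \<Longrightarrow> K_eq v u"
  unfolding K_eq_def by (drule K_rel_neg, erule K_rel_lc) (auto simp: lc_def neg_terms_def)

lemma K_eq_trans: "K_eq u v \<Longrightarrow> K_eq v w \<Longrightarrow> K_eq u w"
  unfolding K_eq_def by (drule (1) K_rel_append, erule K_rel_lc) (auto simp: lc_def)

declare K_eq_trans[trans]

lemma K_eq_cong: "K_eq u v \<Longrightarrow> valid_word p \<Longrightarrow> valid_word s \<Longrightarrow> K_eq (p@u@s) (p@v@s)"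
  unfolding K_eq_def by (drule (2) K_rel_mult, erule K_rel_lc) (auto simp: lc_def)

lemma K_eq_congL: "K_eq u v \<Longrightarrow> valid_word p \<Longrightarrow> K_eq (p@u) (p@v)"
  using K_eq_cong[of u v p "[]"] by simp

lemma K_eq_congR: "K_eq u v \<Longrightarrow> valid_word s \<Longrightarrow> K_eq (u@s) (v@s)"
  using K_eq_cong[of u v "[]" s] by simp

lemma K_rel_subst_diff:
  "list_all2 (\<lambda>(c,w) (c',w'). c = c' \<and> K_eq w w') L L' \<Longrightarrow> K_rel \<alpha> \<beta> (L' @ neg_terms L)"
proof (induction rule: list_all2_induct)
  case Nil then show ?case by (simp add: neg_terms_def K_rel_Nil)
next
  case (Cons x xs y ys)
  obtain c w c' w' where xy: "x = (c,w)" "y = (c',w')" by fastforce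
  have "K_rel \<alpha> \<beta> (map (\<lambda>(d,z). (-c*d, z)) [(1,w),(-1,w')])"
    using Cons(1) xy by (intro K_rel_scale) (auto simp: K_eq_def)
  from K_rel_append[OF this Cons(3)] show ?case
    by (rule K_rel_lc) (use Cons(1) xy in \<open>auto simp: lc_def neg_terms_def\<close>)
qed

lemma K_rel_subst:
  assumes "K_rel \<alpha> \<beta> L" "list_all2 (\<lambda>(c,w) (c',w'). c = c' \<and> K_eq w w') L L'"
  shows "K_rel \<alpha> \<beta> L'"
  using K_rel_append[OF assms(1) K_rel_subst_diff[OF assms(2)]]
  by (rule K_rel_lc) (auto simp: lc_append lc_neg_terms)

end

section \<open>Consequences of the braid group relations\<close>

definition inv_letter :: "letter \<Rightarrow> letter" where
  "inv_letter l = (fst l, \<not> snd l)"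

definition inv_word :: "word \<Rightarrow> word" where
  "inv_word u = rev (map inv_letter u)"

lemma inv_letter_inv[simp]: "inv_letter (inv_letter l) = l"
  by (simp add: inv_letter_def)

lemma fst_inv_letter[simp]: "fst (inv_letter l) = fst l"
  by (simp add: inv_letter_def)

lemma inv_word_Nil[simp]: "inv_word [] = []"
  by (simp add: inv_word_def)

lemma inv_word_Cons[simp]: "inv_word (l # u) = inv_word u @ [inv_letter l]"
  by (simp add: inv_word_def)

lemma inv_word_inv[simp]: "inv_word (inv_word u) = u"
  by (simp add: inv_word_def rev_map comp_def)

lemma valid_inv_word[simp]: "valid_word (inv_word u) = valid_word u"
  by (auto simp: inv_word_def valid_word_def)

context fixes \<alpha> \<beta> :: "'k::comm_ring_1" begin

lemma K_rel_gen: "g \<in> Kgens \<alpha> \<beta> \<Longrightarrow> g = lc L \<Longrightarrow> K_rel \<alpha> \<beta> L"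
  by (simp add: K_rel_def Kideal.gen)

lemma K_eq_inverse: "1 \<le> fst l \<Longrightarrow> K_eq \<alpha> \<beta> [l, inv_letter l] []"
proof -
  assume l1: "1 \<le> fst l"
  obtain i e where l: "l = (i,e)" by fastforce
  show ?thesis
  proof (cases e)
    case True
    show ?thesis unfolding K_eq_def
      by (rule K_rel_gen[OF Kgens.inv1[of i]])
         (use l1 l True in \<open>auto simp: lc_def wd_def inv_letter_def\<close>)
  next
    case False
    show ?thesis unfolding K_eq_def
      by (rule K_rel_gen[OF Kgens.inv2[of i]])
         (use l1 l False in \<open>auto simp: lc_def wd_def inv_letter_def\<close>)
  qed
qed

lemma K_eq_braid:
  "1 \<le> i \<Longrightarrow> K_eq \<alpha> \<beta> [(i,True),(Suc i,True),(i,True)] [(Suc i,True),(i,True),(Suc i,True)]"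
  unfolding K_eq_def by (rule K_rel_gen[OF Kgens.braid[of i]]) (auto simp: lc_def wd_def)

lemma K_eq_comm: "1 \<le> i \<Longrightarrow> Suc i < j \<Longrightarrow> K_eq \<alpha> \<beta> [(i,True),(j,True)] [(j,True),(i,True)]"
  unfolding K_eq_def by (rule K_rel_gen[OF Kgens.comm[of i j]]) (auto simp: lc_def wd_def)

lemma K_eq_cancel:
  "valid_word p \<Longrightarrow> valid_word s \<Longrightarrow> 1 \<le> fst l \<Longrightarrow> K_eq \<alpha> \<beta> (p @ [l, inv_letter l] @ s) (p @ s)"
  using K_eq_cong[OF K_eq_inverse[of l]] by simp

lemma K_eq_cancel':
  "valid_word p \<Longrightarrow> valid_word s \<Longrightarrow> 1 \<le> fst l \<Longrightarrow> K_eq \<alpha> \<beta> (p @ [inv_letter l, l] @ s) (p @ s)"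
  using K_eq_cancel[of p s "inv_letter l"] by simp

lemma K_eq_move_right:
  assumes "K_eq \<alpha> \<beta> u (v @ [l])" "valid_word u" "valid_word v" "1 \<le> fst l"
  shows "K_eq \<alpha> \<beta> (u @ [inv_letter l]) v"
proof -
  have "K_eq \<alpha> \<beta> (u @ [inv_letter l]) (v @ [l] @ [inv_letter l])"
    using K_eq_congR[OF assms(1), of "[inv_letter l]"] assms by simp
  moreover have "K_eq \<alpha> \<beta> (v @ [l, inv_letter l] @ []) (v @ [])"
    using K_eq_cancel[of v "[]" l] assms by simp
  ultimately show ?thesis using K_eq_trans by fastforce
qed

lemma K_eq_move_left:
  assumes "K_eq \<alpha> \<beta> ([l] @ u) v" "valid_word u" "valid_word v" "1 \<le> fst l"
  shows "K_eq \<alpha> \<beta> u ([inv_letter l] @ v)"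
proof -
  have "K_eq \<alpha> \<beta> ([] @ [inv_letter l, l] @ u) ([] @ u)"
    using K_eq_cancel'[of "[]" u l] assms by simp
  moreover have "K_eq \<alpha> \<beta> ([inv_letter l] @ [l] @ u) ([inv_letter l] @ v)"
    using K_eq_congL[OF assms(1), of "[inv_letter l]"] assms by simp
  ultimately show ?thesis using K_eq_trans K_eq_sym by fastforce
qed

lemma K_eq_word_inverse: "valid_word u \<Longrightarrow> K_eq \<alpha> \<beta> (u @ inv_word u) []"
proof (induction u)
  case Nil then show ?case by (simp add: K_eq_refl)
next
  case (Cons l u)
  have "K_eq \<alpha> \<beta> ([l] @ (u @ inv_word u) @ [inv_letter l]) ([l] @ [] @ [inv_letter l])"
    using Cons by (intro K_eq_cong) auto
  moreover have "K_eq \<alpha> \<beta> ([] @ [l, inv_letter l] @ []) ([] @ [])"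
    using K_eq_cancel[of "[]" "[]" l] Cons.prems by simp
  ultimately show ?case using K_eq_trans by simp
qed

text \<open>Equal words have equal inverses; this transfers relations between sign patterns.\<close>

lemma K_eq_inv_word:
  assumes eq: "K_eq \<alpha> \<beta> u v" and "valid_word u" "valid_word v"
  shows "K_eq \<alpha> \<beta> (inv_word u) (inv_word v)"
proof -
  have "K_eq \<alpha> \<beta> (inv_word u @ []) (inv_word u @ (v @ inv_word v))"
    using K_eq_congL[OF K_eq_sym[OF K_eq_word_inverse[of v]], of "inv_word u"] assms by simp
  also have "K_eq \<alpha> \<beta> (inv_word u @ v @ inv_word v) (inv_word u @ u @ inv_word v)"
    using K_eq_cong[OF K_eq_sym[OF eq], of "inv_word u" "inv_word v"] assms by simp
  also have "K_eq \<alpha> \<beta> (inv_word u @ u @ inv_word v) (inv_word v)"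
    using K_eq_congR[OF K_eq_word_inverse[of "inv_word u"], of "inv_word v"] assms by simp
  finally show ?thesis by simp
qed

lemma K_eq_conj_inv:
  assumes eq: "K_eq \<alpha> \<beta> (D @ [l]) (l' # D)" and "valid_word D" "1 \<le> fst l" "1 \<le> fst l'"
  shows "K_eq \<alpha> \<beta> (D @ [inv_letter l]) (inv_letter l' # D)"
proof -
  have "K_eq \<alpha> \<beta> (D @ [inv_letter l]) (inv_letter l' # l' # D @ [inv_letter l])"
    using K_eq_sym[OF K_eq_cancel'[of "[]" "D @ [inv_letter l]" l']] assms by simp
  also have "K_eq \<alpha> \<beta> (inv_letter l' # l' # D @ [inv_letter l]) (inv_letter l' # D @ [l, inv_letter l])"
    using K_eq_sym[OF K_eq_cong[OF eq, of "[inv_letter l']" "[inv_letter l]"]] assms by simp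
  also have "K_eq \<alpha> \<beta> (inv_letter l' # D @ [l, inv_letter l]) (inv_letter l' # D)"
    using K_eq_cancel[of "[inv_letter l'] @ D" "[]" l] assms by simp
  finally show ?thesis .
qed

end

definition K_commute :: "'k::comm_ring_1 \<Rightarrow> 'k \<Rightarrow> word \<Rightarrow> word \<Rightarrow> bool" where
  "K_commute a b u v \<longleftrightarrow> K_eq a b (u @ v) (v @ u)"

definition distant :: "letter \<Rightarrow> letter \<Rightarrow> bool" where
  "distant l m \<longleftrightarrow> 1 \<le> fst l \<and> 1 \<le> fst m \<and> (Suc (fst l) < fst m \<or> Suc (fst m) < fst l)"

context fixes \<alpha> \<beta> :: "'k::comm_ring_1" begin

lemma K_commute_sym: "K_commute \<alpha> \<beta> u v \<Longrightarrow> K_commute \<alpha> \<beta> v u"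
  by (simp add: K_commute_def K_eq_sym)

lemma K_commute_inv:
  assumes comm: "K_commute \<alpha> \<beta> [l] v" and "valid_word v" "1 \<le> fst l"
  shows "K_commute \<alpha> \<beta> [inv_letter l] v"
proof -
  have "K_eq \<alpha> \<beta> (inv_letter l # v) (inv_letter l # v @ [l, inv_letter l])"
    using K_eq_sym[OF K_eq_cancel[of "[inv_letter l] @ v" "[]" l]] assms by simp
  also have "K_eq \<alpha> \<beta> (inv_letter l # v @ [l, inv_letter l]) (inv_letter l # l # v @ [inv_letter l])"
    using K_eq_sym[OF K_eq_cong[OF comm[unfolded K_commute_def], of "[inv_letter l]" "[inv_letter l]"]]
      assms by simp
  also have "K_eq \<alpha> \<beta> (inv_letter l # l # v @ [inv_letter l]) (v @ [inv_letter l])"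
    using K_eq_cancel'[of "[]" "v @ [inv_letter l]" l] assms by simp
  finally show ?thesis unfolding K_commute_def by simp
qed

lemma K_commute_letters: "1 \<le> i \<Longrightarrow> Suc i < j \<Longrightarrow> K_commute \<alpha> \<beta> [(i,e)] [(j,f)]"
proof -
  assume ij: "1 \<le> i" "Suc i < j"
  have pos: "K_commute \<alpha> \<beta> [(i,True)] [(j,True)]"
    using K_eq_comm[OF ij] by (simp add: K_commute_def)
  have "K_commute \<alpha> \<beta> [(i,e)] [(j,True)]"
    using pos K_commute_inv[OF pos] ij by (cases e) (auto simp: inv_letter_def)
  then have "K_commute \<alpha> \<beta> [(j,f)] [(i,e)]"
    using K_commute_sym K_commute_inv ij by (cases f) (fastforce simp: inv_letter_def)+
  then show ?thesis by (rule K_commute_sym)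
qed

lemma K_commute_distant: "distant l m \<Longrightarrow> K_commute \<alpha> \<beta> [l] [m]"
  using K_commute_letters[of "fst l" "fst m" "snd l" "snd m"]
    K_commute_sym[OF K_commute_letters[of "fst m" "fst l" "snd m" "snd l"]]
  by (auto simp: distant_def)

text \<open>A letter distant from every letter of v commutes with v; this is what lets x_{i+1}
  pass the word W in replacement (vii) and the factors of delta_m in the shift.\<close>

lemma K_commute_word: "\<forall>m\<in>set v. distant l m \<Longrightarrow> K_commute \<alpha> \<beta> [l] v"
proof (induction v)
  case Nil then show ?case by (simp add: K_commute_def K_eq_refl)
next
  case (Cons m v)
  have valid: "1 \<le> fst l" "1 \<le> fst m" "valid_word v"
    using Cons.prems by (auto simp: distant_def valid_word_def)
  have "K_eq \<alpha> \<beta> ([] @ [l, m] @ v) ([] @ [m, l] @ v)"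
    using K_eq_cong[OF K_commute_distant[of l m, unfolded K_commute_def], of "[]" v] Cons.prems valid
    by simp
  also have "K_eq \<alpha> \<beta> ([] @ [m, l] @ v) ([m] @ (v @ [l]) @ [])"
    using K_eq_cong[OF Cons.IH[unfolded K_commute_def], of "[m]" "[]"] Cons.prems valid by simp
  finally show ?case unfolding K_commute_def by simp
qed

lemma K_eq_far_swap: "1 \<le> i \<Longrightarrow> Suc i < j \<Longrightarrow> K_eq \<alpha> \<beta> [(j,e1),(i,e2)] [(i,e2),(j,e1)]"
  using K_commute_letters[of i j e2 e1] by (simp add: K_commute_def K_eq_sym)

text \<open>The braid relation x_{i+1}^e1 x_i^e2 x_{i+1}^e3 = x_i^e3 x_{i+1}^e2 x_i^e1 holds
  whenever e2 \<in> {e1, e3}: the six sign patterns are obtained from the braid relation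
  by moving letters across and by inverting.\<close>

lemma K_eq_triple:
  assumes i: "1 \<le> i" and signs: "e2 = e1 \<or> e2 = e3"
  shows "K_eq \<alpha> \<beta> [(Suc i,e1),(i,e2),(Suc i,e3)] [(i,e3),(Suc i,e2),(i,e1)]"
proof -
  have braid: "K_eq \<alpha> \<beta> [(i,True),(Suc i,True),(i,True)] [(Suc i,True),(i,True),(Suc i,True)]"
    using K_eq_braid i by blast
  have TTT: "K_eq \<alpha> \<beta> [(Suc i,True),(i,True),(Suc i,True)] [(i,True),(Suc i,True),(i,True)]"
    using K_eq_sym[OF braid] .
  have "K_eq \<alpha> \<beta> [(Suc i,True),(i,True)] [(i,False),(Suc i,True),(i,True),(Suc i,True)]"
    using K_eq_move_left[of \<alpha> \<beta> "(i,True)" "[(Suc i,True),(i,True)]"] braid i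
    by (simp add: inv_letter_def)
  then have TTF: "K_eq \<alpha> \<beta> [(Suc i,True),(i,True),(Suc i,False)] [(i,False),(Suc i,True),(i,True)]"
    using K_eq_move_right[of \<alpha> \<beta> "[(Suc i,True),(i,True)]" "[(i,False),(Suc i,True),(i,True)]" "(Suc i,True)"] i
    by (simp add: inv_letter_def)
  have "K_eq \<alpha> \<beta> [(i,True),(Suc i,True)] [(Suc i,False),(i,True),(Suc i,True),(i,True)]"
    using K_eq_move_left[of \<alpha> \<beta> "(Suc i,True)" "[(i,True),(Suc i,True)]"] TTT i
    by (simp add: inv_letter_def)
  then have "K_eq \<alpha> \<beta> [(i,True),(Suc i,True),(i,False)] [(Suc i,False),(i,True),(Suc i,True)]"
    using K_eq_move_right[of \<alpha> \<beta> "[(i,True),(Suc i,True)]" "[(Suc i,False),(i,True),(Suc i,True)]" "(i,True)"] i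
    by (simp add: inv_letter_def)
  then have FTT: "K_eq \<alpha> \<beta> [(Suc i,False),(i,True),(Suc i,True)] [(i,True),(Suc i,True),(i,False)]"
    by (rule K_eq_sym)
  have FFT: "K_eq \<alpha> \<beta> [(Suc i,False),(i,False),(Suc i,True)] [(i,True),(Suc i,False),(i,False)]"
    using K_eq_inv_word[OF FTT] i by (simp add: inv_letter_def)
  have TFF: "K_eq \<alpha> \<beta> [(Suc i,True),(i,False),(Suc i,False)] [(i,False),(Suc i,False),(i,True)]"
    using K_eq_inv_word[OF TTF] i by (simp add: inv_letter_def)
  have FFF: "K_eq \<alpha> \<beta> [(Suc i,False),(i,False),(Suc i,False)] [(i,False),(Suc i,False),(i,False)]"
    using K_eq_inv_word[OF TTT] i by (simp add: inv_letter_def)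
  show ?thesis using signs TTT TTF FTT FFT TFF FFF by (cases e1; cases e2; cases e3) auto
qed

end


section \<open>Shifting indices by conjugation\<close>

text \<open>Conjugation by delta_m = x_1 x_2 ... x_{m+1} maps x_j to x_{j+1} for j \<le> m.  Hence
  every relation among letters of index at most m remains a relation after raising
  all indices by one; this transports the defining relations from index 1 to all i.\<close>

definition shift :: "letter \<Rightarrow> letter" where
  "shift l = (Suc (fst l), snd l)"

definition shift_terms :: "('k \<times> word) list \<Rightarrow> ('k \<times> word) list" where
  "shift_terms L = map (\<lambda>(c,w). (c, map shift w)) L"

definition delta :: "nat \<Rightarrow> word" where
  "delta m = map (\<lambda>j. (j,True)) [1..<m+2]"

lemma fst_shift[simp]: "fst (shift l) = Suc (fst l)"
  by (simp add: shift_def)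

lemma valid_delta[simp]: "valid_word (delta m)"
  by (auto simp: delta_def valid_word_def)

lemma delta_split:
  assumes "1 \<le> j" "j \<le> m"
  shows "delta m = map (\<lambda>k. (k,True)) [1..<j] @ [(j,True),(Suc j,True)]
                   @ map (\<lambda>k. (k,True)) [j+2..<m+2]"
proof -
  have "[1..<m+2] = [1..<j] @ [j..<m+2]" using upt_add_eq_append[of 1 j "m+2-j"] assms by simp
  also have "[j..<m+2] = j # Suc j # [j+2..<m+2]" using assms by (simp add: upt_conv_Cons)
  finally show ?thesis by (simp add: delta_def)
qed

context fixes \<alpha> \<beta> :: "'k::comm_ring_1" begin

lemma delta_conj_pos:
  assumes j: "1 \<le> j" "j \<le> m"
  shows "K_eq \<alpha> \<beta> (delta m @ [(j,True)]) ((Suc j,True) # delta m)"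
proof -
  define A where "A = map (\<lambda>k. (k,True)) [1..<j]"
  define B where "B = map (\<lambda>k. (k,True)) [j+2..<m+2]"
  have valid: "valid_word A" "valid_word B" by (auto simp: A_def B_def valid_word_def)
  have comm_B: "K_commute \<alpha> \<beta> [(j,True)] B"
    by (rule K_commute_word) (use j in \<open>auto simp: B_def distant_def\<close>)
  have comm_A: "K_commute \<alpha> \<beta> [(Suc j,True)] A"
    by (rule K_commute_word) (use j in \<open>auto simp: A_def distant_def\<close>)
  have "K_eq \<alpha> \<beta> (A @ [(j,True),(Suc j,True)] @ B @ [(j,True)])
                  (A @ [(j,True),(Suc j,True),(j,True)] @ B)"
    using K_eq_congL[OF K_eq_sym[OF comm_B[unfolded K_commute_def]], of "A @ [(j,True),(Suc j,True)]"]
      valid j by simp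
  also have "K_eq \<alpha> \<beta> (A @ [(j,True),(Suc j,True),(j,True)] @ B)
                       (A @ [(Suc j,True),(j,True),(Suc j,True)] @ B)"
    using K_eq_cong[OF K_eq_braid[of j], of A B] valid j by simp
  also have "K_eq \<alpha> \<beta> (A @ [(Suc j,True),(j,True),(Suc j,True)] @ B)
                       ((Suc j,True) # A @ [(j,True),(Suc j,True)] @ B)"
    using K_eq_congR[OF K_eq_sym[OF comm_A[unfolded K_commute_def]], of "[(j,True),(Suc j,True)] @ B"]
      valid j by simp
  finally show ?thesis unfolding delta_split[OF j] A_def B_def by simp
qed

lemma delta_conj:
  assumes "1 \<le> fst l" "fst l \<le> m"
  shows "K_eq \<alpha> \<beta> (delta m @ [l]) (shift l # delta m)"
proof -
  obtain j e where l: "l = (j,e)" by fastforce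
  have pos: "K_eq \<alpha> \<beta> (delta m @ [(j,True)]) ((Suc j,True) # delta m)"
    using delta_conj_pos assms l by simp
  show ?thesis
    using pos K_eq_conj_inv[OF pos] assms l by (cases e) (auto simp: shift_def inv_letter_def)
qed

lemma delta_conj_word:
  "valid_word w \<Longrightarrow> \<forall>l\<in>set w. fst l \<le> m \<Longrightarrow> K_eq \<alpha> \<beta> (delta m @ w @ inv_word (delta m)) (map shift w)"
proof (induction w)
  case Nil then show ?case using K_eq_word_inverse[of "delta m"] by simp
next
  case (Cons l w)
  have "K_eq \<alpha> \<beta> (delta m @ l # w @ inv_word (delta m)) (shift l # delta m @ w @ inv_word (delta m))"
    using K_eq_congR[OF delta_conj[of l m], of "w @ inv_word (delta m)"] Cons.prems by simp
  also have "K_eq \<alpha> \<beta> (shift l # delta m @ w @ inv_word (delta m)) (shift l # map shift w)"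
    using K_eq_congL[OF Cons.IH, of "[shift l]"] Cons.prems by simp
  finally show ?case by simp
qed

lemma K_rel_shift:
  assumes rel: "K_rel \<alpha> \<beta> L" and valid: "\<forall>(c,w)\<in>set L. valid_word w"
  shows "K_rel \<alpha> \<beta> (shift_terms L)"
proof -
  define m where "m = sum_list (map (wt \<circ> snd) L)"
  have m: "fst l \<le> m" if "(c,w) \<in> set L" "l \<in> set w" for c w l
  proof -
    have "fst l \<le> wt w" unfolding wt_def using that(2) by (simp add: member_le_sum_list)
    also have "wt w \<le> m" unfolding m_def using that(1) by (force intro: member_le_sum_list)
    finally show ?thesis .
  qed
  have conj: "K_eq \<alpha> \<beta> (delta m @ w @ inv_word (delta m)) (map shift w)" if "(c,w) \<in> set L" for c w
    using that valid m[OF that] by (intro delta_conj_word) auto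
  have "K_rel \<alpha> \<beta> (map (\<lambda>(c,w). (c, delta m @ w @ inv_word (delta m))) L)"
    using K_rel_mult[OF rel] by simp
  then show ?thesis unfolding shift_terms_def
    by (rule K_rel_subst) (auto simp: list.rel_map intro!: list.rel_refl_strong conj)
qed

lemma K_rel_all_indices:
  assumes base: "K_rel \<alpha> \<beta> (F 1)"
    and step: "\<And>i. 1 \<le> i \<Longrightarrow> F (Suc i) = shift_terms (F i)"
    and valid: "\<And>i. 1 \<le> i \<Longrightarrow> \<forall>(c,w)\<in>set (F i). valid_word w"
    and i: "1 \<le> i"
  shows "K_rel \<alpha> \<beta> (F i)"
  using i
proof (induction i rule: dec_induct)
  case base then show ?case by (rule assms(1))
next
  case (step n) then show ?case using K_rel_shift[OF _ valid] assms(2) by simp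
qed

end

section \<open>The relations behind the basic replacements\<close>

text \<open>Each relation is recorded as an explicit list of terms.  inv_rel, cubic_rel, P_rel
  and triple_rel come from the generators; square_rel and inv_square_rel are the
  relations behind replacements (ii) and (iii), and Q_rel the one behind (vi).\<close>

definition inv_rel :: "nat \<Rightarrow> bool \<Rightarrow> ('k::comm_ring_1 \<times> word) list" where
  "inv_rel i e = [(1,[(i,e),(i,\<not>e)]),(-1,[])]"

definition cubic_rel :: "'k::comm_ring_1 \<Rightarrow> 'k \<Rightarrow> nat \<Rightarrow> ('k \<times> word) list" where
  "cubic_rel a b i = [(1,[(i,True),(i,True),(i,True)]),(-a,[(i,True),(i,True)]),(b,[(i,True)]),(-1,[])]"

definition square_rel :: "'k::comm_ring_1 \<Rightarrow> 'k \<Rightarrow> nat \<Rightarrow> ('k \<times> word) list" where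
  "square_rel a b i = [(1,[(i,True),(i,True)]),(-a,[(i,True)]),(b,[]),(-1,[(i,False)])]"

definition inv_square_rel :: "'k::comm_ring_1 \<Rightarrow> 'k \<Rightarrow> nat \<Rightarrow> ('k \<times> word) list" where
  "inv_square_rel a b i = [(1,[(i,False),(i,False)]),(-b,[(i,False)]),(a,[]),(-1,[(i,True)])]"

definition P_terms :: "'k::comm_ring_1 \<Rightarrow> 'k \<Rightarrow> letter \<Rightarrow> letter \<Rightarrow> letter \<Rightarrow> letter \<Rightarrow> ('k \<times> word) list" where
  "P_terms \<alpha> \<beta> x xb y yb =
    [ (2*\<alpha> - \<beta>^2, []),
      (-1, [x]), (-1, [y]),
      (-(\<alpha>^2 - \<beta>), [xb]), (-(\<alpha>^2 - \<beta>), [yb]),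
      (\<beta>, [x, y]), (\<beta>, [y, x]),
      (\<alpha>, [x, yb]), (\<alpha>, [y, xb]), (\<alpha>, [xb, y]), (\<alpha>, [yb, x]),
      (\<alpha>*\<beta> - 1, [xb, yb]), (\<alpha>*\<beta> - 1, [yb, xb]),
      (-\<alpha>, [x, y, x]),
      (-1, [xb, y, x]), (-1, [x, yb, x]), (-1, [x, y, xb]),
      (-\<beta>, [xb, yb, x]), (-\<beta>, [x, yb, xb]),
      (\<alpha> - \<beta>^2, [xb, yb, xb]) ]"

lemma Ppoly_lc: "Ppoly a b x xb y yb = lc (P_terms a b x xb y yb)"
  by (simp add: Ppoly_def P_terms_def)

definition P_rel :: "'k::comm_ring_1 \<Rightarrow> 'k \<Rightarrow> nat \<Rightarrow> ('k \<times> word) list" where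
  "P_rel a b i = (1,[(Suc i,True),(i,False),(Suc i,True)])
                 # neg_terms (P_terms a b (i,True) (i,False) (Suc i,True) (Suc i,False))"

definition Q_rel :: "'k::comm_ring_1 \<Rightarrow> 'k \<Rightarrow> nat \<Rightarrow> ('k \<times> word) list" where
  "Q_rel a b i = (1,[(Suc i,False),(i,True),(Suc i,False)])
                 # neg_terms (P_terms b a (i,False) (i,True) (Suc i,False) (Suc i,True))"

definition triple_rel :: "nat \<Rightarrow> bool \<Rightarrow> bool \<Rightarrow> bool \<Rightarrow> ('k::comm_ring_1 \<times> word) list" where
  "triple_rel i e1 e2 e3 = [(1,[(Suc i,e1),(i,e2),(Suc i,e3)]),(-1,[(i,e3),(Suc i,e2),(i,e1)])]"

lemmas relation_defs = lc_def sandwich_def neg_terms_def inv_rel_def cubic_rel_def square_rel_def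
  inv_square_rel_def P_rel_def Q_rel_def triple_rel_def P_terms_def

context fixes \<alpha> \<beta> :: "'k::comm_ring_1" begin

lemma K_rel_inv: "1 \<le> i \<Longrightarrow> K_rel \<alpha> \<beta> (inv_rel i e)"
  using K_eq_inverse[of "(i,e)"] by (simp add: K_eq_def inv_rel_def inv_letter_def)

lemma K_rel_triple: "1 \<le> i \<Longrightarrow> e2 = e1 \<or> e2 = e3 \<Longrightarrow> K_rel \<alpha> \<beta> (triple_rel i e1 e2 e3)"
  using K_eq_triple[of i e2 e1 e3 \<alpha> \<beta>] by (simp add: K_eq_def triple_rel_def)

lemma K_rel_cubic: "1 \<le> i \<Longrightarrow> K_rel \<alpha> \<beta> (cubic_rel \<alpha> \<beta> i)"
proof (rule K_rel_all_indices)
  show "K_rel \<alpha> \<beta> (cubic_rel \<alpha> \<beta> 1)"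
    by (rule K_rel_gen[OF Kgens.cubic]) (auto simp: lc_def wd_def cubic_rel_def)
qed (auto simp: cubic_rel_def shift_terms_def shift_def)

lemma K_rel_P: "1 \<le> i \<Longrightarrow> K_rel \<alpha> \<beta> (P_rel \<alpha> \<beta> i)"
proof (rule K_rel_all_indices)
  have "(\<lambda>w. wd [(2,True),(1,False),(2,True)] w - Ppoly \<alpha> \<beta> (1,True) (1,False) (2,True) (2,False) w)
      = lc (P_rel \<alpha> \<beta> 1)"
    by (simp add: wd_lc Ppoly_lc P_rel_def lc_Cons lc_Nil lc_neg_terms numeral_2_eq_2)
  then show "K_rel \<alpha> \<beta> (P_rel \<alpha> \<beta> 1)" by (rule K_rel_gen[OF Kgens.prel])
qed (auto simp: P_rel_def P_terms_def neg_terms_def shift_terms_def shift_def)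

text \<open>x_i^2 = \<alpha> x_i - \<beta> + x_i^-1: multiply the cubic relation by x_i^-1.\<close>

lemma K_rel_square: "1 \<le> i \<Longrightarrow> K_rel \<alpha> \<beta> (square_rel \<alpha> \<beta> i)"
proof -
  assume i: "1 \<le> i"
  have "K_rel \<alpha> \<beta> (sandwich 1 [] (cubic_rel \<alpha> \<beta> i) [(i,False)]
      @ sandwich (-1) [(i,True),(i,True)] (inv_rel i True) []
      @ sandwich \<alpha> [(i,True)] (inv_rel i True) [] @ sandwich (-\<beta>) [] (inv_rel i True) [])"
    using i by (intro K_rel_append K_rel_sandwich K_rel_cubic K_rel_inv) auto
  then show ?thesis
    by (rule K_rel_lc, intro lc_eqI) (auto simp: relation_defs algebra_simps)
qed

text \<open>x_i^-2 = \<beta> x_i^-1 - \<alpha> + x_i: multiply (ii) by x_i^-2.\<close>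

lemma K_rel_inv_square: "1 \<le> i \<Longrightarrow> K_rel \<alpha> \<beta> (inv_square_rel \<alpha> \<beta> i)"
proof -
  assume i: "1 \<le> i"
  have "K_rel \<alpha> \<beta> (sandwich (-1) [(i,True),(i,False),(i,False)] (square_rel \<alpha> \<beta> i) []
      @ sandwich 1 [] (inv_rel i True) [(i,False),(i,True),(i,True)]
      @ sandwich (-\<alpha>) [] (inv_rel i True) [(i,False),(i,True)]
      @ sandwich (-1) [] (inv_rel i True) [(i,False),(i,False)]
      @ sandwich \<beta> [] (inv_rel i True) [(i,False)]
      @ sandwich 1 [] (inv_rel i False) [(i,True)]
      @ sandwich (-\<alpha>) [] (inv_rel i False) [])"
    using i by (intro K_rel_append K_rel_sandwich K_rel_square K_rel_inv) auto
  then show ?thesis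
    by (rule K_rel_lc, intro lc_eqI) (auto simp: relation_defs algebra_simps)
qed

text \<open>The relation defining Q is a consequence of the one defining P: an explicit
  combination of P, (ii), braid and inverse relations, checked by expanding both sides.\<close>

lemma K_rel_Q: "1 \<le> i \<Longrightarrow> K_rel \<alpha> \<beta> (Q_rel \<alpha> \<beta> i)"
proof -
  assume i: "1 \<le> i"
  have "K_rel \<alpha> \<beta> (sandwich (-1) [] (square_rel \<alpha> \<beta> (Suc i)) [(i,True),(Suc i,False)]
      @ sandwich 1 [(Suc i,True)] (triple_rel i True True False) []
      @ sandwich 1 [] (P_rel \<alpha> \<beta> i) [(i,True)]
      @ sandwich (-\<alpha>) [(i,True),(Suc i,True)] (square_rel \<alpha> \<beta> i) []
      @ sandwich (-1) [(i,True),(Suc i,True)] (inv_rel i False) []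
      @ sandwich (-1) [(i,True),(Suc i,False)] (square_rel \<alpha> \<beta> i) []
      @ sandwich (-\<beta>) [(i,True),(Suc i,False)] (inv_rel i False) []
      @ sandwich (-1) [(i,False),(Suc i,True)] (square_rel \<alpha> \<beta> i) []
      @ sandwich (-\<beta>) [(i,False),(Suc i,False)] (square_rel \<alpha> \<beta> i) []
      @ sandwich (\<alpha> - \<beta>^2) [(i,False),(Suc i,False)] (inv_rel i False) []
      @ sandwich (-\<alpha>) [] (triple_rel i True True False) []
      @ sandwich \<beta> [(Suc i,True)] (square_rel \<alpha> \<beta> i) []
      @ sandwich \<alpha> [(Suc i,True)] (inv_rel i False) []
      @ sandwich \<alpha> [(Suc i,False)] (square_rel \<alpha> \<beta> i) []
      @ sandwich (\<alpha>*\<beta> - 1) [(Suc i,False)] (inv_rel i False) []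
      @ sandwich (-1) [] (square_rel \<alpha> \<beta> i) []
      @ sandwich (\<beta> - \<alpha>^2) [] (inv_rel i False) [])"
    using i by (intro K_rel_append K_rel_sandwich K_rel_square K_rel_inv K_rel_P K_rel_triple) auto
  then show ?thesis
    by (rule K_rel_lc, intro lc_eqI) (simp add: relation_defs power2_eq_square algebra_simps)
qed

end

section \<open>Basic replacements preserve pi and control the weight\<close>

lemma wt_Nil[simp]: "wt [] = 0"
  by (simp add: wt_def)

lemma wt_Cons[simp]: "wt (l # u) = fst l + wt u"
  by (simp add: wt_def)

lemma wt_append[simp]: "wt (u @ v) = wt u + wt v"
  by (simp add: wt_def)

definition lighter :: "('k \<times> word) list \<Rightarrow> nat \<Rightarrow> bool" where
  "lighter L n \<longleftrightarrow> (\<forall>x\<in>set L. valid_word (snd x) \<and> wt (snd x) < n)"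

lemma lighter_Cons[simp]: "lighter (x # B) n \<longleftrightarrow> valid_word (snd x) \<and> wt (snd x) < n \<and> lighter B n"
  by (auto simp: lighter_def)

lemma lighter_Nil[simp]: "lighter [] n"
  by (auto simp: lighter_def)

context fixes \<alpha> \<beta> :: "'k::comm_ring_1" begin

lemma triple_rep_relation:
  assumes i: "1 \<le> i"
  shows "\<exists>L. triple_rep \<alpha> \<beta> i e1 e2 e3 = lc L \<and>
           K_rel \<alpha> \<beta> ((1,[(Suc i,e1),(i,e2),(Suc i,e3)]) # neg_terms L) \<and> lighter L (wt [(Suc i,e1),(i,e2),(Suc i,e3)])"
proof (cases "e2 = e1 \<or> e2 = e3")
  case True
  show ?thesis
    using True i K_rel_triple[OF i True, of \<alpha> \<beta>]
    by (intro exI[of _ "[(1,[(i,e3),(Suc i,e2),(i,e1)])]"])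
       (simp add: triple_rep_def wd_lc triple_rel_def neg_terms_def)
next
  case False
  then have signs: "e2 = (\<not> e1)" "e3 = e1" by auto
  show ?thesis
  proof (cases e1)
    case True
    show ?thesis
      using True signs i K_rel_P[OF i, of \<alpha> \<beta>]
      by (intro exI[of _ "P_terms \<alpha> \<beta> (i,True) (i,False) (Suc i,True) (Suc i,False)"])
         (simp add: triple_rep_def Ppoly_lc P_rel_def P_terms_def)
  next
    case False
    show ?thesis
      using False signs i K_rel_Q[OF i, of \<alpha> \<beta>]
      by (intro exI[of _ "P_terms \<beta> \<alpha> (i,False) (i,True) (Suc i,False) (Suc i,True)"])
         (simp add: triple_rep_def Ppoly_lc Qpoly_def Q_rel_def P_terms_def)
  qed
qed

text \<open>Type (vii): x_{i+1} x_i W x_{i+1} -> V W with W below x_i.  Since W involves only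
  letters distant from x_{i+1}, the last letter commutes past W, reducing to (iv)-(vi).\<close>

lemma triple_rep_gap_relation:
  assumes i: "1 \<le> i" and W: "\<forall>l\<in>set W. 1 \<le> fst l \<and> fst l < i"
  shows "\<exists>L. emult (triple_rep \<alpha> \<beta> i e1 e2 e3) (wd W) = lc L \<and>
           K_rel \<alpha> \<beta> ((1, [(Suc i,e1),(i,e2)] @ W @ [(Suc i,e3)]) # neg_terms L) \<and>
           lighter L (wt ([(Suc i,e1),(i,e2)] @ W @ [(Suc i,e3)]))"
proof -
  obtain L where L: "triple_rep \<alpha> \<beta> i e1 e2 e3 = lc L"
    "K_rel \<alpha> \<beta> ((1,[(Suc i,e1),(i,e2),(Suc i,e3)]) # neg_terms L)"
    "lighter L (wt [(Suc i,e1),(i,e2),(Suc i,e3)])"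
    using triple_rep_relation[OF i] by blast
  have valid: "valid_word W" using W by (auto simp: valid_word_def)
  define LW where "LW = map (\<lambda>(c,w). (c, w@W)) L"
  have "K_commute \<alpha> \<beta> [(Suc i,e3)] W"
    by (rule K_commute_word) (use i W in \<open>auto simp: distant_def\<close>)
  then have "K_eq \<alpha> \<beta> ([(Suc i,e1),(i,e2)] @ [(Suc i,e3)] @ W) ([(Suc i,e1),(i,e2)] @ W @ [(Suc i,e3)])"
    using i by (intro K_eq_congL) (auto simp: K_commute_def)
  moreover have "K_rel \<alpha> \<beta> (sandwich 1 [] ((1,[(Suc i,e1),(i,e2),(Suc i,e3)]) # neg_terms L) W)"
    using K_rel_sandwich[OF L(2)] valid by simp
  ultimately have "K_rel \<alpha> \<beta> ((1, [(Suc i,e1),(i,e2)] @ W @ [(Suc i,e3)]) # neg_terms LW)"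
    by (elim K_rel_subst)
       (auto simp: LW_def sandwich_def neg_terms_def list.rel_map intro!: list.rel_refl K_eq_refl)
  moreover have "emult (triple_rep \<alpha> \<beta> i e1 e2 e3) (wd W) = lc LW"
    by (simp add: L(1) LW_def emult_wd_lc_right)
  moreover have "lighter LW (wt ([(Suc i,e1),(i,e2)] @ W @ [(Suc i,e3)]))"
    using L(3) valid by (auto simp: LW_def lighter_def)
  ultimately show ?thesis by blast
qed

lemma basic_rep_relation:
  "basic_rep \<alpha> \<beta> t U V \<Longrightarrow> valid_word U \<and> (\<exists>L. V = lc L \<and> K_rel \<alpha> \<beta> ((1,U) # neg_terms L) \<and>
     (t \<noteq> Rviii \<longrightarrow> lighter L (wt U)) \<and>
     (t = Rviii \<longrightarrow> (\<exists>i j e1 e2. 1 \<le> i \<and> Suc i < j \<and> U = [(j,e1),(i,e2)]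
                                  \<and> L = [(1,[(i,e2),(j,e1)])])))"
proof (induction rule: basic_rep.induct)
  case (r1a i)
  show ?case using r1a K_rel_inv[OF r1a, of \<alpha> \<beta> True]
    by (auto simp: wd_lc inv_rel_def neg_terms_def intro!: exI[of _ "[(1,[])]"])
next
  case (r1b i)
  show ?case using r1b K_rel_inv[OF r1b, of \<alpha> \<beta> False]
    by (auto simp: wd_lc inv_rel_def neg_terms_def intro!: exI[of _ "[(1,[])]"])
next
  case (r2 i)
  then show ?case using K_rel_square[OF r2, of \<alpha> \<beta>] by (auto simp: square_rel_def neg_terms_def)
next
  case (r3 i)
  then show ?case using K_rel_inv_square[OF r3, of \<alpha> \<beta>] by (auto simp: inv_square_rel_def neg_terms_def)
next
  case (r456 i e1 e2 e3)
  then obtain L where "triple_rep \<alpha> \<beta> i e1 e2 e3 = lc L"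
    "K_rel \<alpha> \<beta> ((1,[(Suc i,e1),(i,e2),(Suc i,e3)]) # neg_terms L)" "lighter L (wt [(Suc i,e1),(i,e2),(Suc i,e3)])"
    using triple_rep_relation by blast
  then show ?case using r456 by (auto simp: triple_type_def intro!: exI[of _ L])
next
  case (r7 i W e1 e2 e3)
  then show ?case using triple_rep_gap_relation[OF r7] by (auto simp: valid_word_def)
next
  case (r8 i j e1 e2)
  then show ?case using K_eq_far_swap[OF r8, of \<alpha> \<beta> e1 e2]
    by (auto simp: K_eq_def wd_lc neg_terms_def intro!: exI[of _ "[(1,[(i,e2),(j,e1)])]"])
qed

end

section \<open>Part (a): elementary reductions\<close>

lemma wtp_Nil[simp]: "wtp [] = 0"
  by (simp add: wtp_def)

lemma wtp_Cons[simp]: "wtp (l # v) = fst l + wtp v + wt v"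
proof -
  have "wtp (l # v) = fst l + (\<Sum>j<length v. (j + 2) * fst (v ! j))"
    by (simp add: wtp_def sum.lessThan_Suc_shift del: sum.lessThan_Suc)
  also have "(\<Sum>j<length v. (j + 2) * fst (v ! j))
           = (\<Sum>j<length v. (j + 1) * fst (v ! j)) + (\<Sum>j<length v. fst (v ! j))"
    by (simp add: sum.distrib[symmetric] algebra_simps)
  also have "(\<Sum>j<length v. fst (v ! j)) = wt v"
    by (simp add: wt_def sum_list_sum_nth atLeast0LessThan)
  finally show ?thesis by (simp add: wtp_def)
qed

lemma wtp_append[simp]: "wtp (u @ v) = wtp u + wtp v + length u * wt v"
  by (induction u) (simp_all add: algebra_simps)

text \<open>wt' is bounded in terms of wt; this makes wt^2 - wt' a usable termination measure.\<close>

lemma wtp_le_wt_square: "valid_word w \<Longrightarrow> wtp w \<le> wt w * wt w"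
proof (induction w)
  case Nil then show ?case by simp
next
  case (Cons l v)
  then have "1 \<le> fst l" "wtp v \<le> wt v * wt v" by auto
  moreover from this have "fst l \<le> fst l * fst l" "wt v \<le> fst l * wt v" by simp_all
  moreover have "(fst l + wt v) * (fst l + wt v) = fst l * fst l + wt v * wt v + 2 * (fst l * wt v)"
    by (simp add: algebra_simps)
  ultimately show ?case unfolding wtp_Cons wt_Cons by linarith
qed

text \<open>Left-hand sides of replacements are nonempty, so a reducible word has weight \<ge> 1.\<close>

lemma basic_rep_nonempty: "basic_rep a b t U V \<Longrightarrow> U \<noteq> []"
  by (induction rule: basic_rep.induct) auto

lemma wt_elt_ge: "in_kF X \<Longrightarrow> X w \<noteq> 0 \<Longrightarrow> wt w \<le> wt_elt X"
  unfolding wt_elt_def in_kF_def by (intro Max_ge) auto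

lemma wt_elt_le: "(\<And>w. X w \<noteq> 0 \<Longrightarrow> wt w \<le> N) \<Longrightarrow> wt_elt X \<le> N"
proof -
  assume bound: "\<And>w. X w \<noteq> 0 \<Longrightarrow> wt w \<le> N"
  then have "\<forall>x \<in> insert 0 (wt ` {w. X w \<noteq> 0}). x \<le> N" by auto
  moreover then have "finite (insert 0 (wt ` {w. X w \<noteq> 0}))"
    using finite_nat_set_iff_bounded_le by blast
  ultimately show ?thesis unfolding wt_elt_def by (intro Max.boundedI) auto
qed

lemma wt_elt_wd: "wt_elt (wd Y) = wt Y"
proof -
  have "{w. wd Y w \<noteq> (0::'a::comm_ring_1)} = {Y}" by (auto simp: wd_def)
  then show ?thesis by (simp add: wt_elt_def)
qed

definition reduction_result :: "'k::comm_ring_1 \<Rightarrow> 'k \<Rightarrow> rtype \<Rightarrow> word \<Rightarrow> ('k \<times> word) list \<Rightarrow> bool" where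
  "reduction_result a b t W L \<longleftrightarrow> K_rel a b ((1,W) # neg_terms L) \<and>
     (t \<noteq> Rviii \<longrightarrow> lighter L (wt W)) \<and>
     (t = Rviii \<longrightarrow> (\<exists>Y. L = [(1,Y)] \<and> valid_word Y \<and> wt Y = wt W \<and> wtp W < wtp Y))"

context fixes \<alpha> \<beta> :: "'k::comm_ring_1" begin

lemma elem_red_word_result:
  assumes valid: "valid_word W" and red: "elem_red_word \<alpha> \<beta> t W X'"
  shows "1 \<le> wt W \<and> (\<exists>L. X' = lc L \<and> reduction_result \<alpha> \<beta> t W L)"
proof -
  obtain C U V D where W: "W = C @ U @ D" and rep: "basic_rep \<alpha> \<beta> t U V"
    and X': "X' = emult (emult (wd C) V) (wd D)"
    using red unfolding elem_red_word_def by blast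
  have vCUD: "valid_word C" "valid_word D" "valid_word U" using valid W by auto
  obtain L0 where L0: "V = lc L0" "K_rel \<alpha> \<beta> ((1,U) # neg_terms L0)"
    "t \<noteq> Rviii \<longrightarrow> lighter L0 (wt U)"
    "t = Rviii \<longrightarrow> (\<exists>i j e1 e2. 1 \<le> i \<and> Suc i < j \<and> U = [(j,e1),(i,e2)] \<and> L0 = [(1,[(i,e2),(j,e1)])])"
    using basic_rep_relation[OF rep] by blast
  define L where "L = map (\<lambda>(c,w). (c, C@w@D)) L0"
  have "X' = lc L" unfolding X' L0(1) L_def
    by (simp add: emult_wd_lc_left emult_wd_lc_right comp_def split_def)
  moreover have "K_rel \<alpha> \<beta> ((1,W) # neg_terms L)"
    using K_rel_mult[OF L0(2) vCUD(1,2)] W by (simp add: L_def neg_terms_def comp_def split_def)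
  moreover have "t \<noteq> Rviii \<longrightarrow> lighter L (wt W)"
    using L0(3) vCUD W unfolding L_def lighter_def by auto
  moreover have "t = Rviii \<longrightarrow> (\<exists>Y. L = [(1,Y)] \<and> valid_word Y \<and> wt Y = wt W \<and> wtp W < wtp Y)"
    using L0(4) vCUD W by (auto simp: L_def algebra_simps)
  moreover have "1 \<le> wt W"
    using vCUD(3) basic_rep_nonempty[OF rep] W by (cases U) auto
  ultimately show ?thesis unfolding reduction_result_def by blast
qed

lemma elem_red_pi_wt:
  assumes kX: "in_kF X" and red: "elem_red \<alpha> \<beta> X X'"
  shows "pi_eq \<alpha> \<beta> X X' \<and> wt_elt X' \<le> wt_elt X"
proof -
  obtain W W' t where W: "X W \<noteq> 0" "elem_red_word \<alpha> \<beta> t W W'"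
    and X': "X' = (\<lambda>w. X w - (if w = W then X W else 0) + X W * W' w)"
    using red unfolding elem_red_def by blast
  have "valid_word W" using kX W(1) by (simp add: in_kF_def)
  then obtain L where L: "W' = lc L" "reduction_result \<alpha> \<beta> t W L"
    using elem_red_word_result W(2) by blast
  text \<open>X - X' is X W times the relation W - lc L.\<close>
  have "(\<lambda>w. X W * lc ((1,W) # neg_terms L) w) \<in> Kideal \<alpha> \<beta>"
    using L(2) by (simp add: reduction_result_def K_rel_def Kideal.smult)
  moreover have "(\<lambda>w. X W * lc ((1,W) # neg_terms L) w) = (\<lambda>w. X w - X' w)"
    by (rule ext) (simp add: X' L(1) lc_Cons lc_neg_terms algebra_simps)
  ultimately have "pi_eq \<alpha> \<beta> X X'" by (simp add: pi_eq_def)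
  moreover have light: "wt w \<le> wt W" if "lc L w \<noteq> 0" for w
    using lc_nonzero_listed[OF that] L(2)
    by (cases "t = Rviii") (auto simp: reduction_result_def lighter_def less_imp_le)
  have "wt_elt X' \<le> wt_elt X"
  proof (rule wt_elt_le)
    fix w assume "X' w \<noteq> 0"
    then have "X w \<noteq> 0 \<or> lc L w \<noteq> 0" by (auto simp: X' L(1) split: if_splits)
    then show "wt w \<le> wt_elt X"
      using wt_elt_ge[OF kX] light wt_elt_ge[OF kX W(1)] by (meson le_trans)
  qed
  ultimately show ?thesis by blast
qed

lemma elem_red_word_weight:
  assumes valid: "valid_word W" and red: "elem_red_word \<alpha> \<beta> t W X'"
  shows "(wt_elt X' = wt W \<longleftrightarrow> t = Rviii) \<and> (t = Rviii \<longrightarrow> (\<exists>Y. X' = wd Y \<and> wtp W < wtp Y))"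
proof -
  obtain L where L: "X' = lc L" "reduction_result \<alpha> \<beta> t W L" and pos: "1 \<le> wt W"
    using elem_red_word_result[OF valid red] by blast
  show ?thesis
  proof (cases "t = Rviii")
    case True
    then obtain Y where "X' = wd Y" "wt Y = wt W" "wtp W < wtp Y"
      using L by (auto simp: reduction_result_def wd_lc)
    then show ?thesis using True by (auto simp: wt_elt_wd)
  next
    case False
    have "wt_elt X' \<le> wt W - 1"
    proof (rule wt_elt_le)
      fix w assume "X' w \<noteq> 0"
      then have "w \<in> snd ` set L" using L(1) lc_nonzero_listed by simp
      then show "wt w \<le> wt W - 1" using L(2) False by (auto simp: reduction_result_def lighter_def)
    qed
    then show ?thesis using False pos by auto
  qed
qed

end

section \<open>Part (b): the reduced words span K\<close>

definition red_span :: "'k::comm_ring_1 \<Rightarrow> 'k \<Rightarrow> 'k elt \<Rightarrow> bool" where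
  "red_span a b X \<longleftrightarrow>
     (\<exists>S c. finite S \<and> S \<subseteq> red_words a b \<and> pi_eq a b X (\<lambda>w. \<Sum>v\<in>S. c v * wd v w))"

context fixes \<alpha> \<beta> :: "'k::comm_ring_1" begin

lemma pi_eq_refl: "pi_eq \<alpha> \<beta> X X"
  using Kideal.zero[of \<alpha> \<beta>] by (simp add: pi_eq_def)

lemma pi_eq_trans: "pi_eq \<alpha> \<beta> X Y \<Longrightarrow> pi_eq \<alpha> \<beta> Y Z \<Longrightarrow> pi_eq \<alpha> \<beta> X Z"
  unfolding pi_eq_def by (drule (1) Kideal.add) simp

lemma pi_eq_add:
  "pi_eq \<alpha> \<beta> X Y \<Longrightarrow> pi_eq \<alpha> \<beta> X' Y' \<Longrightarrow> pi_eq \<alpha> \<beta> (\<lambda>w. X w + X' w) (\<lambda>w. Y w + Y' w)"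
  unfolding pi_eq_def by (drule (1) Kideal.add) (simp add: algebra_simps)

lemma pi_eq_smult: "pi_eq \<alpha> \<beta> X Y \<Longrightarrow> pi_eq \<alpha> \<beta> (\<lambda>w. d * X w) (\<lambda>w. d * Y w)"
  unfolding pi_eq_def by (drule Kideal.smult[where c = d]) (simp add: algebra_simps)

lemma red_span_pi_eq: "pi_eq \<alpha> \<beta> X Y \<Longrightarrow> red_span \<alpha> \<beta> Y \<Longrightarrow> red_span \<alpha> \<beta> X"
  unfolding red_span_def using pi_eq_trans by blast

lemma red_span_zero: "red_span \<alpha> \<beta> (\<lambda>w. 0)"
  unfolding red_span_def using pi_eq_refl by (intro exI[of _ "{}"]) simp

lemma red_span_add:
  assumes "red_span \<alpha> \<beta> X" "red_span \<alpha> \<beta> Y"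
  shows "red_span \<alpha> \<beta> (\<lambda>w. X w + Y w)"
proof -
  obtain S1 c1 S2 c2 where S: "finite S1" "S1 \<subseteq> red_words \<alpha> \<beta>" "finite S2" "S2 \<subseteq> red_words \<alpha> \<beta>"
    and pi: "pi_eq \<alpha> \<beta> X (\<lambda>w. \<Sum>v\<in>S1. c1 v * wd v w)" "pi_eq \<alpha> \<beta> Y (\<lambda>w. \<Sum>v\<in>S2. c2 v * wd v w)"
    using assms unfolding red_span_def by blast
  define c where "c v = (if v \<in> S1 then c1 v else 0) + (if v \<in> S2 then c2 v else 0)" for v
  have fin: "finite (S1 \<union> S2)" using S by simp
  have restrict: "(\<Sum>v\<in>S1 \<union> S2. if v \<in> S then f v else 0) = sum f S" if "S \<subseteq> S1 \<union> S2" for S f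
    using sum.inter_restrict[OF fin, of f S] that by (simp add: Int_absorb1)
  have "(\<Sum>v\<in>S1 \<union> S2. c v * wd v w)
      = (\<Sum>v\<in>S1 \<union> S2. (if v \<in> S1 then c1 v * wd v w else 0) + (if v \<in> S2 then c2 v * wd v w else 0))"
    for w unfolding c_def by (rule sum.cong) (auto simp: distrib_right)
  also have "\<dots> w = (\<Sum>v\<in>S1. c1 v * wd v w) + (\<Sum>v\<in>S2. c2 v * wd v w)" for w
    by (simp add: sum.distrib restrict)
  finally have "(\<Sum>v\<in>S1 \<union> S2. c v * wd v w) = (\<Sum>v\<in>S1. c1 v * wd v w) + (\<Sum>v\<in>S2. c2 v * wd v w)" for w .
  then have "pi_eq \<alpha> \<beta> (\<lambda>w. X w + Y w) (\<lambda>w. \<Sum>v\<in>S1 \<union> S2. c v * wd v w)"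
    using pi_eq_add[OF pi] by simp
  then show ?thesis unfolding red_span_def using fin S by (intro exI[of _ "S1 \<union> S2"] exI[of _ c]) simp
qed

lemma red_span_smult: "red_span \<alpha> \<beta> X \<Longrightarrow> red_span \<alpha> \<beta> (\<lambda>w. d * X w)"
proof -
  assume "red_span \<alpha> \<beta> X"
  then obtain S c where S: "finite S" "S \<subseteq> red_words \<alpha> \<beta>"
    and pi: "pi_eq \<alpha> \<beta> X (\<lambda>w. \<Sum>v\<in>S. c v * wd v w)"
    unfolding red_span_def by blast
  have "pi_eq \<alpha> \<beta> (\<lambda>w. d * X w) (\<lambda>w. \<Sum>v\<in>S. (d * c v) * wd v w)"
    using pi_eq_smult[OF pi, of d] by (simp add: sum_distrib_left mult.assoc)
  then show ?thesis unfolding red_span_def using S by (intro exI[of _ S] exI[of _ "\<lambda>v. d * c v"]) simp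
qed

lemma red_span_sum:
  "finite F \<Longrightarrow> (\<And>u. u \<in> F \<Longrightarrow> red_span \<alpha> \<beta> (f u)) \<Longrightarrow> red_span \<alpha> \<beta> (\<lambda>w. \<Sum>u\<in>F. f u w)"
proof (induction F rule: finite_induct)
  case empty then show ?case using red_span_zero by simp
next
  case (insert x F)
  then have "red_span \<alpha> \<beta> (\<lambda>w. f x w + (\<Sum>u\<in>F. f u w))" by (intro red_span_add) auto
  then show ?case using insert by simp
qed

lemma red_span_lc: "(\<And>c u. (c,u) \<in> set L \<Longrightarrow> red_span \<alpha> \<beta> (wd u)) \<Longrightarrow> red_span \<alpha> \<beta> (lc L)"
proof (induction L)
  case Nil then show ?case using red_span_zero by (simp add: lc_Nil)
next
  case (Cons x L)
  obtain c u where x: "x = (c,u)" by fastforce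
  have "lc (x # L) = (\<lambda>w. c * wd u w + lc L w)"
    by (rule ext) (simp add: x lc_Cons wd_def)
  moreover have "red_span \<alpha> \<beta> (\<lambda>w. c * wd u w + lc L w)"
    using Cons x by (intro red_span_add red_span_smult) auto
  ultimately show ?case by simp
qed

text \<open>Every valid word is in the span, by well-founded induction on (wt, wt^2 - wt'):
  a non-reduced word equals in K either lighter words or (type viii) a word of the same
  weight and larger wt'.\<close>

lemma red_span_word: "valid_word w \<Longrightarrow> red_span \<alpha> \<beta> (wd w)"
proof (induction w rule: wf_induct[OF wf_measures[of "[wt, \<lambda>w. wt w * wt w - wtp w]"]])
  case (1 w)
  show ?case
  proof (cases "w \<in> red_words \<alpha> \<beta>")
    case True
    have "pi_eq \<alpha> \<beta> (wd w) (\<lambda>x. \<Sum>v\<in>{w}. 1 * wd v x)" using pi_eq_refl by simp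
    then show ?thesis unfolding red_span_def using True by (intro exI[of _ "{w}"] exI[of _ "\<lambda>_. 1"]) simp
  next
    case False
    then obtain t W' where "elem_red_word \<alpha> \<beta> t w W'" using 1(2) unfolding red_words_def by blast
    then obtain L where L: "reduction_result \<alpha> \<beta> t w L"
      using elem_red_word_result[OF 1(2)] by blast
    have "lc ((1,w) # neg_terms L) = (\<lambda>x. wd w x - lc L x)"
      by (rule ext) (simp add: lc_Cons lc_neg_terms wd_def)
    then have pi: "pi_eq \<alpha> \<beta> (wd w) (lc L)"
      using L by (simp add: reduction_result_def K_rel_def pi_eq_def)
    have "red_span \<alpha> \<beta> (lc L)"
    proof (cases "t = Rviii")
      case True
      then obtain Y where Y: "L = [(1,Y)]" "valid_word Y" "wt Y = wt w" "wtp w < wtp Y"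
        using L unfolding reduction_result_def by blast
      then have "(Y, w) \<in> measures [wt, \<lambda>w. wt w * wt w - wtp w]"
        using wtp_le_wt_square[OF Y(2)] by simp
      then show ?thesis using 1(1) Y by (intro red_span_lc) auto
    next
      case False
      then have "lighter L (wt w)" using L unfolding reduction_result_def by blast
      then show ?thesis using 1(1) by (intro red_span_lc) (auto simp: lighter_def)
    qed
    then show ?thesis using red_span_pi_eq[OF pi] by blast
  qed
qed

lemma red_span_all: "in_kF X \<Longrightarrow> red_span \<alpha> \<beta> X"
proof -
  assume kX: "in_kF X"
  have expand: "X = (\<lambda>w. \<Sum>u\<in>{w. X w \<noteq> 0}. X u * wd u w)"
  proof
    fix w
    have "(\<Sum>u\<in>{w. X w \<noteq> 0}. X u * wd u w) = (\<Sum>u\<in>{w. X w \<noteq> 0}. if u = w then X u else 0)"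
      by (rule sum.cong) (auto simp: wd_def)
    also have "\<dots> = X w" using kX by (simp add: in_kF_def sum.delta')
    finally show "X w = (\<Sum>u\<in>{w. X w \<noteq> 0}. X u * wd u w)" by simp
  qed
  have "red_span \<alpha> \<beta> (\<lambda>w. \<Sum>u\<in>{w. X w \<noteq> 0}. X u * wd u w)"
    using kX by (intro red_span_sum red_span_smult red_span_word) (auto simp: in_kF_def)
  then show ?thesis by (rule ssubst[OF expand])
qed

end

section \<open>Part (c): the reduced words\<close>

definition reducible :: "'k::comm_ring_1 \<Rightarrow> 'k \<Rightarrow> word \<Rightarrow> bool" where
  "reducible a b w \<longleftrightarrow> (\<exists>C U D t V. w = C @ U @ D \<and> basic_rep a b t U V)"

text \<open>Appending l to w creates a left-hand side of a basic replacement ending at l: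
  a letter of the same index as the last one (types i-iii), a last letter of index
  larger by at least two (type viii), or x_{i+1} x_i W x_{i+1} with W below x_i
  (types iv-vii).\<close>

definition last_redex :: "word \<Rightarrow> letter \<Rightarrow> bool" where
  "last_redex w l \<longleftrightarrow> (w \<noteq> [] \<and> fst (last w) = fst l) \<or> (w \<noteq> [] \<and> fst l + 1 < fst (last w)) \<or>
     (\<exists>u i e1 e2 W. w = u @ [(Suc i,e1),(i,e2)] @ W \<and> fst l = Suc i \<and> 1 \<le> i
                    \<and> (\<forall>m\<in>set W. 1 \<le> fst m \<and> fst m < i))"

lemma redex_at_end_is_last_redex:
  assumes rep: "basic_rep a b t U V" and split: "w @ [l] = C @ U"
  shows "last_redex w l"
  using rep
proof (cases rule: basic_rep.cases)
  case (r456 i e1 e2 e3)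
  then have "w = C @ [(Suc i,e1),(i,e2)]" "fst l = Suc i" using split by auto
  then show ?thesis using r456 unfolding last_redex_def
    by (intro disjI2 exI[of _ C] exI[of _ i] exI[of _ e1] exI[of _ e2] exI[of _ "[]"]) auto
next
  case (r7 i W e1 e2 e3)
  then have "w = C @ [(Suc i,e1),(i,e2)] @ W" "fst l = Suc i"
    using split[unfolded r7 append_assoc[symmetric]] by auto
  then show ?thesis using r7 unfolding last_redex_def by blast
qed (use split in \<open>auto simp: last_redex_def append_eq_append_conv2 Cons_eq_append_conv\<close>)

lemma last_redex_reducible:
  assumes valid: "valid_word (w @ [l])" and redex: "last_redex w l"
  shows "reducible a b (w @ [l])"
proof -
  obtain i e where l: "l = (i,e)" by fastforce
  have i: "1 \<le> i" using valid l by simp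
  consider (same) w' f where "w = w' @ [(i,f)]"
    | (far) w' j f where "w = w' @ [(j,f)]" "i + 1 < j"
    | (triple) u e1 e2 W where "w = u @ [(Suc (i - 1),e1),(i - 1,e2)] @ W" "1 \<le> i - 1"
        "\<forall>m\<in>set W. 1 \<le> fst m \<and> fst m < i - 1"
    using redex l unfolding last_redex_def
    by (metis (no_types) Suc_eq_plus1 append_butlast_last_id diff_Suc_1 fst_conv prod.collapse)
  then show ?thesis
  proof cases
    case same
    have "\<exists>t V. basic_rep a b t [(i,f),(i,e)] V"
      using basic_rep.r1a[OF i] basic_rep.r1b[OF i] basic_rep.r2[OF i] basic_rep.r3[OF i]
      by (cases e; cases f) (simp_all, blast+)
    then show ?thesis unfolding reducible_def using same l
      by (metis append.assoc append_Cons append_Nil append_Nil2)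
  next
    case far
    have "basic_rep a b Rviii [(j,f),(i,e)] (wd [(i,e),(j,f)])"
      using i far by (intro basic_rep.r8) auto
    then show ?thesis unfolding reducible_def using far l
      by (metis append.assoc append_Cons append_Nil append_Nil2)
  next
    case triple
    have "Suc (i - 1) = i" using triple by simp
    then have "basic_rep a b Rvii ([(i,e1),(i - 1,e2)] @ W @ [(i,e)])
                 (emult (triple_rep a b (i - 1) e1 e2 e) (wd W))"
      using basic_rep.r7[OF triple(2,3), of a b e1 e2 e] by simp
    moreover have "w @ [l] = u @ ([(i,e1),(i - 1,e2)] @ W @ [(i,e)]) @ []"
      using triple l \<open>Suc (i - 1) = i\<close> by simp
    ultimately show ?thesis unfolding reducible_def by blast
  qed
qed

lemma reducible_snoc:
  assumes valid: "valid_word (w @ [l])"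
  shows "reducible a b (w @ [l]) \<longleftrightarrow> reducible a b w \<or> last_redex w l"
proof
  assume "reducible a b (w @ [l])"
  then obtain C U D t V where split: "w @ [l] = C @ U @ D" and rep: "basic_rep a b t U V"
    unfolding reducible_def by blast
  show "reducible a b w \<or> last_redex w l"
  proof (cases D rule: rev_cases)
    case Nil
    then show ?thesis using redex_at_end_is_last_redex[OF rep] split by simp
  next
    case (snoc D' l')
    then have "w = C @ U @ D'" using split by simp
    then show ?thesis using rep unfolding reducible_def by blast
  qed
next
  assume "reducible a b w \<or> last_redex w l"
  then show "reducible a b (w @ [l])"
  proof
    assume "reducible a b w"
    then show ?thesis unfolding reducible_def by (metis append.assoc)
  qed (rule last_redex_reducible[OF valid])
qed


text \<open>The letter-by-letter description of reduced words: each letter either continues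
  the current descending run (index one below the previous letter) or starts a new run
  with an index larger than every index so far.\<close>

fun max_index :: "word \<Rightarrow> nat" where
  "max_index [] = 0"
| "max_index (l # w) = max (fst l) (max_index w)"

lemma max_index_snoc[simp]: "max_index (w @ [l]) = max (max_index w) (fst l)"
  by (induction w) auto

lemma max_index_ge: "l \<in> set w \<Longrightarrow> fst l \<le> max_index w"
  by (induction w) auto

definition admissible_next :: "word \<Rightarrow> letter \<Rightarrow> bool" where
  "admissible_next w l \<longleftrightarrow> (w \<noteq> [] \<and> fst l + 1 = fst (last w)) \<or> max_index w < fst l"

definition admissible :: "word \<Rightarrow> bool" where
  "admissible w \<longleftrightarrow> (\<forall>k<length w. 1 \<le> fst (w!k) \<and> admissible_next (take k w) (w!k))"

lemma admissible_Nil[simp]: "admissible []"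
  by (simp add: admissible_def)

lemma admissible_snoc:
  "admissible (w @ [l]) \<longleftrightarrow> admissible w \<and> 1 \<le> fst l \<and> admissible_next w l"
  by (auto simp: admissible_def nth_append less_Suc_eq)

lemma admissible_valid: "admissible w \<Longrightarrow> valid_word w"
  by (induction w rule: rev_induct) (auto simp: admissible_snoc)

lemma descending_run:
  "admissible w \<Longrightarrow> w \<noteq> [] \<Longrightarrow> fst (last w) \<le> i \<Longrightarrow> Suc i \<le> max_index w \<Longrightarrow>
   \<exists>u e1 e2 W. w = u @ [(Suc i,e1),(i,e2)] @ W \<and> (\<forall>m\<in>set W. fst (last w) \<le> fst m \<and> fst m < i)"
proof (induction w rule: rev_induct)
  case Nil then show ?case by simp
next
  case (snoc l w)
  have adm: "admissible w" "admissible_next w l" using snoc.prems(1) by (auto simp: admissible_snoc)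
  show ?case
  proof (cases "w \<noteq> [] \<and> fst l + 1 = fst (last w)")
    case run: True
    have max: "max_index (w @ [l]) = max_index w" using run max_index_ge[of "last w" w] by auto
    show ?thesis
    proof (cases "fst l = i")
      case True
      then have "w @ [l] = butlast w @ [(Suc i, snd (last w)), (i, snd l)] @ []"
        using run by (metis append_butlast_last_id append.assoc append_Cons append_Nil prod.collapse
            Suc_eq_plus1)
      then show ?thesis
        by (intro exI[of _ "butlast w"] exI[of _ "snd (last w)"] exI[of _ "snd l"] exI[of _ "[]"]) simp
    next
      case False
      then have "fst (last w) \<le> i" "Suc i \<le> max_index w" using run snoc.prems(3,4) max by auto
      then obtain u e1 e2 W where uw: "w = u @ [(Suc i,e1),(i,e2)] @ W"
          "\<forall>m\<in>set W. fst (last w) \<le> fst m \<and> fst m < i"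
        using snoc.IH adm(1) run by blast
      then have "w @ [l] = u @ [(Suc i,e1),(i,e2)] @ (W @ [l])"
        "\<forall>m\<in>set (W @ [l]). fst (last (w @ [l])) \<le> fst m \<and> fst m < i"
        using run False snoc.prems(3) by auto
      then show ?thesis by blast
    qed
  next
    case False
    then have "max_index w < fst l" using adm(2) unfolding admissible_next_def by auto
    then show ?thesis using snoc.prems by simp
  qed
qed

text \<open>If w is admissible and l is not an admissible next letter, then l completes a
  redex at the end of w: the run down to l passes through some x_{i+1} x_i.\<close>

lemma last_redex_if_not_admissible_next:
  assumes adm: "admissible w" and l1: "1 \<le> fst l" and not_next: "\<not> admissible_next w l"
  shows "last_redex w l"
proof (rule ccontr)
  assume no_redex: "\<not> last_redex w l"
  have wne: "w \<noteq> []" using not_next l1 by (auto simp: admissible_next_def)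
  have "fst l \<le> max_index w" "fst (last w) < fst l"
    using not_next no_redex wne by (auto simp: admissible_next_def last_redex_def)
  then obtain i where i: "fst l = Suc i" "fst (last w) \<le> i" "Suc i \<le> max_index w"
    by (metis Suc_pred' less_Suc_eq_le less_nat_zero_code not_gr_zero)
  obtain u e1 e2 W where uw: "w = u @ [(Suc i,e1),(i,e2)] @ W"
      "\<forall>m\<in>set W. fst (last w) \<le> fst m \<and> fst m < i"
    using descending_run[OF adm wne i(2,3)] by blast
  have "1 \<le> fst (last w)" using admissible_valid[OF adm] wne by (auto simp: valid_word_def)
  then have "1 \<le> i" "\<forall>m\<in>set W. 1 \<le> fst m \<and> fst m < i" using uw(2) i(2) by auto
  then have "last_redex w l" unfolding last_redex_def using uw(1) i(1) by blast
  then show False using no_redex by blast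
qed

lemma admissible_next_no_last_redex:
  assumes next_ok: "admissible_next w l"
  shows "\<not> last_redex w l"
proof
  assume redex: "last_redex w l"
  show False
  proof (cases "w \<noteq> [] \<and> fst l + 1 = fst (last w)")
    case run: True
    then have "\<not> (w \<noteq> [] \<and> fst (last w) = fst l)" "\<not> (w \<noteq> [] \<and> fst l + 1 < fst (last w))" by auto
    then obtain u i e1 e2 W where uw: "w = u @ [(Suc i,e1),(i,e2)] @ W" "fst l = Suc i"
        "\<forall>m\<in>set W. 1 \<le> fst m \<and> fst m < i"
      using redex unfolding last_redex_def by blast
    then show False using run by (cases W rule: rev_cases) auto
  next
    case False
    then have max: "max_index w < fst l" using next_ok unfolding admissible_next_def by auto
    from redex show False unfolding last_redex_def
    proof (elim disjE conjE exE)
      assume "w \<noteq> []" "fst (last w) = fst l"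
      then show False using max max_index_ge[of "last w" w] by simp
    next
      assume "w \<noteq> []" "fst l + 1 < fst (last w)"
      then show False using max max_index_ge[of "last w" w] by simp
    next
      fix u i e1 e2 W assume "w = u @ [(Suc i, e1), (i, e2)] @ W" "fst l = Suc i"
      then show False using max max_index_ge[of "(Suc i,e1)" w] by simp
    qed
  qed
qed

theorem irreducible_iff_admissible: "valid_word w \<Longrightarrow> \<not> reducible a b w \<longleftrightarrow> admissible w"
proof (induction w rule: rev_induct)
  case Nil
  then show ?case unfolding reducible_def using basic_rep_nonempty by fastforce
next
  case (snoc l w)
  have valid: "valid_word w" "1 \<le> fst l" using snoc.prems by auto
  have "\<not> reducible a b (w @ [l]) \<longleftrightarrow> \<not> reducible a b w \<and> \<not> last_redex w l"
    using reducible_snoc[OF snoc.prems] by blast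
  also have "\<dots> \<longleftrightarrow> admissible w \<and> \<not> last_redex w l" using snoc.IH[OF valid(1)] by blast
  also have "\<dots> \<longleftrightarrow> admissible w \<and> admissible_next w l"
    using last_redex_if_not_admissible_next[OF _ valid(2)] admissible_next_no_last_redex by blast
  also have "\<dots> \<longleftrightarrow> admissible (w @ [l])" using valid(2) by (simp add: admissible_snoc)
  finally show ?case .
qed

lemma rev_upt_Suc: "j \<le> i \<Longrightarrow> rev [j..<Suc i] = rev [Suc j..<Suc i] @ [j]"
  by (simp add: upt_conv_Cons)

lemma block_shape:
  assumes b: "map fst b = rev [j..<Suc i]" and ji: "j \<le> i"
  shows "b \<noteq> [] \<and> fst (hd b) = i \<and> fst (last b) = j"
proof -
  have "hd (map fst b) = i" "last (map fst b) = j" "b \<noteq> []"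
    using b ji by (auto simp: hd_rev last_rev upt_conv_Cons)
  then show ?thesis by (simp add: hd_map last_map)
qed

lemma admissible_append_block:
  "map fst b = rev [j..<Suc i] \<Longrightarrow> 1 \<le> j \<Longrightarrow> j \<le> i \<Longrightarrow> admissible w \<Longrightarrow> max_index w < i \<Longrightarrow>
   admissible (w @ b) \<and> max_index (w @ b) = i"
proof (induction b arbitrary: j rule: rev_induct)
  case Nil then show ?case by simp
next
  case (snoc l b)
  have "map fst b = rev [Suc j..<Suc i]" "fst l = j"
    using snoc.prems(1) rev_upt_Suc[OF snoc.prems(3)] by auto
  show ?case
  proof (cases "j = i")
    case True
    then have "b = []" using \<open>map fst b = rev [Suc j..<Suc i]\<close> by simp
    then show ?thesis using snoc.prems \<open>fst l = j\<close> True by (simp add: admissible_snoc admissible_next_def)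
  next
    case False
    then have "Suc j \<le> i" using snoc.prems(3) by simp
    then have "admissible (w @ b) \<and> max_index (w @ b) = i" "b \<noteq> [] \<and> fst (last b) = Suc j"
      using snoc.IH[OF \<open>map fst b = _\<close>] snoc.prems(2,4,5) block_shape[OF \<open>map fst b = _\<close>] by auto
    then show ?thesis using \<open>fst l = j\<close> snoc.prems(2,3) max_index_snoc[of "w @ b" l]
      by (auto simp: admissible_snoc[of "w @ b" l, simplified] admissible_next_def)
  qed
qed

lemma normal_admissible:
  "(\<forall>b\<in>set bs. is_block b) \<Longrightarrow> sorted_wrt (<) (map (\<lambda>b. fst (hd b)) bs) \<Longrightarrow>
   admissible (concat bs) \<and> (bs \<noteq> [] \<longrightarrow> max_index (concat bs) = fst (hd (last bs)))"
proof (induction bs rule: rev_induct)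
  case Nil then show ?case by simp
next
  case (snoc b bs)
  have IH: "admissible (concat bs)" "bs \<noteq> [] \<longrightarrow> max_index (concat bs) = fst (hd (last bs))"
    using snoc by (auto simp: sorted_wrt_append)
  obtain i j where b: "1 \<le> j" "j \<le> i" "map fst b = rev [j..<Suc i]"
    using snoc.prems(1) by (auto simp: is_block_def)
  have hd_b: "fst (hd b) = i" using block_shape[OF b(3) b(2)] by simp
  have "\<forall>x\<in>set bs. fst (hd x) < i" using snoc.prems(2) hd_b by (auto simp: sorted_wrt_append)
  then have "max_index (concat bs) < i" using IH b by (cases "bs = []") auto
  then show ?case using admissible_append_block[OF b(3) b(1) b(2) IH(1)] hd_b by simp
qed

lemma extend_last_block:
  assumes bs: "\<forall>b\<in>set bs. is_block b" "sorted_wrt (<) (map (\<lambda>b. fst (hd b)) bs)"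
    and w: "w = concat bs" and run: "w \<noteq> []" "fst l + 1 = fst (last w)" and l1: "1 \<le> fst l"
  shows "\<exists>bs'. (\<forall>b\<in>set bs'. is_block b) \<and> sorted_wrt (<) (map (\<lambda>b. fst (hd b)) bs')
           \<and> w @ [l] = concat bs' \<and> map (\<lambda>b. fst (hd b)) bs' = map (\<lambda>b. fst (hd b)) bs"
proof -
  have nonempty: "\<forall>b\<in>set bs. b \<noteq> []" using bs(1) block_shape by (fastforce simp: is_block_def)
  obtain bs0 b where bsb: "bs = bs0 @ [b]" using w run by (cases bs rule: rev_cases) auto
  obtain i j where b: "1 \<le> j" "j \<le> i" "map fst b = rev [j..<Suc i]"
    using bs(1) bsb by (force simp: is_block_def)
  have "last w = last b" using w bsb nonempty by simp
  then have j: "fst l + 1 = j" using run block_shape[OF b(3) b(2)] by simp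
  then have "map fst (b @ [l]) = rev [j..<Suc i] @ [j - 1]" using b(3) by simp
  also have "\<dots> = rev [j - 1..<Suc i]" using rev_upt_Suc[of "j - 1" i] b(1,2) by simp
  finally have "is_block (b @ [l])" unfolding is_block_def using j b(2) l1 by fastforce
  moreover have "fst (hd (b @ [l])) = fst (hd b)" using block_shape[OF b(3) b(2)] by simp
  ultimately show ?thesis using bs w bsb by (intro exI[of _ "bs0 @ [b @ [l]]"]) auto
qed

lemma admissible_normal:
  "admissible w \<Longrightarrow> \<exists>bs. (\<forall>b\<in>set bs. is_block b) \<and> sorted_wrt (<) (map (\<lambda>b. fst (hd b)) bs) \<and>
     w = concat bs \<and> (\<forall>b\<in>set bs. fst (hd b) \<le> max_index w)"
proof (induction w rule: rev_induct)
  case Nil then show ?case by (intro exI[of _ "[]"]) simp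
next
  case (snoc l w)
  have adm: "admissible w" "1 \<le> fst l" "admissible_next w l" using snoc.prems by (auto simp: admissible_snoc)
  obtain bs where bs: "\<forall>b\<in>set bs. is_block b" "sorted_wrt (<) (map (\<lambda>b. fst (hd b)) bs)"
    "w = concat bs" "\<forall>b\<in>set bs. fst (hd b) \<le> max_index w"
    using snoc.IH[OF adm(1)] by blast
  show ?case
  proof (cases "w \<noteq> [] \<and> fst l + 1 = fst (last w)")
    case True
    then obtain bs' where bs': "\<forall>b\<in>set bs'. is_block b" "sorted_wrt (<) (map (\<lambda>b. fst (hd b)) bs')"
        "w @ [l] = concat bs'" "map (\<lambda>b. fst (hd b)) bs' = map (\<lambda>b. fst (hd b)) bs"
      using extend_last_block[OF bs(1-3) _ _ adm(2)] by blast
    have "\<forall>b\<in>set bs'. fst (hd b) \<le> max_index (w @ [l])"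
    proof
      fix b' assume "b' \<in> set bs'"
      then have "fst (hd b') \<in> (\<lambda>b. fst (hd b)) ` set bs" using bs'(4) by (metis image_eqI set_map)
      then show "fst (hd b') \<le> max_index (w @ [l])" using bs(4) by auto
    qed
    then show ?thesis using bs' by blast
  next
    case False
    then have "max_index w < fst l" using adm(3) unfolding admissible_next_def by auto
    moreover have "is_block [l]" unfolding is_block_def using adm(2) by (intro exI[of _ "fst l"]) simp
    ultimately show ?thesis using bs
      by (intro exI[of _ "bs @ [[l]]"]) (fastforce simp: sorted_wrt_append)
  qed
qed

theorem red_words_eq_normal_words: "red_words a b = normal_words"
proof -
  have "w \<in> red_words a b \<longleftrightarrow> valid_word w \<and> \<not> reducible a b w" for w
    unfolding red_words_def reducible_def elem_red_word_def by blast
  also have "\<dots> w \<longleftrightarrow> admissible w" for w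
    using irreducible_iff_admissible admissible_valid by blast
  also have "\<dots> w \<longleftrightarrow> w \<in> normal_words" for w
    using admissible_normal normal_admissible unfolding normal_words_def by blast
  finally show ?thesis by blast
qed


theorem proposition2p1:
  fixes \<alpha> \<beta> :: "'k::comm_ring_1"
  shows
    "(\<forall>X X'. in_kF X \<longrightarrow> elem_red \<alpha> \<beta> X X' \<longrightarrow>
        pi_eq \<alpha> \<beta> X X' \<and> wt_elt X' \<le> wt_elt X)
   \<and> (\<forall>W t X'. valid_word W \<longrightarrow> elem_red_word \<alpha> \<beta> t W X' \<longrightarrow>
        ((wt_elt X' = wt W \<longleftrightarrow> t = Rviii) \<and>
         (t = Rviii \<longrightarrow> (\<exists>Y. X' = wd Y \<and> wtp W < wtp Y))))
   \<and> (\<forall>X. in_kF X \<longrightarrow> (\<exists>S c. finite S \<and> S \<subseteq> red_words \<alpha> \<beta> \<and>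
        pi_eq \<alpha> \<beta> X (\<lambda>w. \<Sum>v\<in>S. c v * wd v w)))
   \<and> red_words \<alpha> \<beta> = normal_words"
proof -
  have "pi_eq \<alpha> \<beta> X X' \<and> wt_elt X' \<le> wt_elt X" if "in_kF X" "elem_red \<alpha> \<beta> X X'" for X X'
    using elem_red_pi_wt[OF that] .
  moreover have "(wt_elt X' = wt W \<longleftrightarrow> t = Rviii) \<and> (t = Rviii \<longrightarrow> (\<exists>Y. X' = wd Y \<and> wtp W < wtp Y))"
    if "valid_word W" "elem_red_word \<alpha> \<beta> t W X'" for W t X'
    using elem_red_word_weight[OF that] .
  moreover have "\<exists>S c. finite S \<and> S \<subseteq> red_words \<alpha> \<beta> \<and> pi_eq \<alpha> \<beta> X (\<lambda>w. \<Sum>v\<in>S. c v * wd v w)"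
    if "in_kF X" for X
    using red_span_all[OF that] unfolding red_span_def .
  ultimately show ?thesis using red_words_eq_normal_words by blast
qed

end
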